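(* Let $(G, \phi, (g_1,\dots,g_n))$ be an $n$-expansion group. Then $((L_\bullet(G), [\,,]_G), L_\bullet(\phi))$ is an $n$-expansion Lie algebra.
   Context: $V_{[n]} = \mathbb{F}_2^n$ with basis $e_1,\dots,e_n$. An $n$-expansion group is a triple $(G,\phi,(g_1,\dots,g_n))$: $G$ a group, $\phi: G\to V_{[n]}$ a homomorphism with $\phi(g_i) = e_i$, $g_i^2 = 1$ for all $i$, $\ker\phi$ an elementary abelian $2$-group, and $[G,G]=\ker\phi$. For a group $G$ let $G^{(1)} = G$, $G^{(i+1)} = [G, G^{(i)}]$, $L_m(G) = G^{(m)}/G^{(m+1)}$, $L_\bullet(G) = \bigoplus_{m\geq1}L_m(G)$ with bracket $[\,,]_G$ induced by group commutators (a graded Lie algebra), and for a homomorphism $\phi$, $L_\bullet(\phi)$ the induced graded Lie algebra homomorphism; $V_{[n]}$ is viewed as a graded Lie algebra concentrated in degree $1$ with zero bracket. A graded Lie algebra over $\mathbb{F}_2$ is a Lie algebra $L_\bullet = \bigoplus_{m\geq1}L_m$ over $\mathbb{F}_2$ with $[L_h,L_k]\subseteq L_{h+k}$. An $n$-expansion Lie algebra is a pair $(L_\bullet,\psi)$ with: (1) $L_\bullet$ a graded Lie algebra over $\mathbb{F}_2$ and $\psi: L_\bullet\to V_{[n]}$ a surjective graded Lie algebra homomorphism; (2) $\ker\psi$ an abelian subalgebra; (3) $[L_\bullet,L_\bullet] = \ker\psi$; (4) for each $i\geq4$ and $\sigma_1,\dots,\sigma_i\in L_1$, the element $[\sigma_1,[\sigma_2,[\dots,[\sigma_{i-1},\sigma_i]\dots]]]$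 does not depend on the order of $\sigma_1,\dots,\sigma_{i-2}$ and vanishes whenever $\sigma_s=\sigma_t$ for distinct $s,t\in\{1,\dots,i-2\}$; moreover, if $\tau_1,\tau_2\in L_1$ and $\psi(\tau_1)\in\{e_1,\dots,e_n\}$, then $[\tau_1,[\tau_1,\tau_2]]=0$. *)

theory Defs
  imports "HOL-Algebra.Algebra" "HOL-Library.Multiset"
begin

text \<open>Vectors of F_2^n are encoded as subsets of {1..n} (support of the vector);
  addition is symmetric difference, the basis vector e_i is {i}.
  As a graded Lie algebra it is concentrated in degree 1 with zero bracket;
  the bracket is the ring multiplication field (one is unused).\<close>

definition Vlie :: "nat \<Rightarrow> nat set ring" where
  "Vlie n = \<lparr>carrier = Pow {1..n}, monoid.mult = (\<lambda>_ _. {}), monoid.one = {},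
             ring.zero = {}, ring.add = (\<lambda>A B. (A - B) \<union> (B - A))\<rparr>"

definition Vcomp :: "nat \<Rightarrow> nat \<Rightarrow> nat set set" where
  "Vcomp n m = (if m = 1 then Pow {1..n} else {{}})"

definition basis_vec :: "nat \<Rightarrow> nat set" where
  "basis_vec i = {i}"

definition commutator :: "('g, 'b) monoid_scheme \<Rightarrow> 'g \<Rightarrow> 'g \<Rightarrow> 'g" where
  "commutator G x y = x \<otimes>\<^bsub>G\<^esub> y \<otimes>\<^bsub>G\<^esub> inv\<^bsub>G\<^esub> x \<otimes>\<^bsub>G\<^esub> inv\<^bsub>G\<^esub> y"

primrec lcs :: "('g, 'b) monoid_scheme \<Rightarrow> nat \<Rightarrow> 'g set" where
  "lcs G 0 = carrier G"
| "lcs G (Suc k) = generate G {commutator G x y | x y. x \<in> carrier G \<and> y \<in> lcs G k}"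

text \<open>Gamma G m is G^(m) for m \<ge> 1 (G^(1) = G, G^(i+1) = [G, G^(i)]).\<close>
definition Gamma :: "('g, 'b) monoid_scheme \<Rightarrow> nat \<Rightarrow> 'g set" where
  "Gamma G m = lcs G (m - 1)"

definition expansion_group ::
  "nat \<Rightarrow> ('g, 'b) monoid_scheme \<Rightarrow> ('g \<Rightarrow> nat set) \<Rightarrow> (nat \<Rightarrow> 'g) \<Rightarrow> bool" where
  "expansion_group n G \<phi> g \<longleftrightarrow>
     group G \<and> \<phi> \<in> hom G (add_monoid (Vlie n)) \<and>
     (\<forall>i\<in>{1..n}. g i \<in> carrier G \<and> \<phi> (g i) = basis_vec i \<and> g i \<otimes>\<^bsub>G\<^esub> g i = \<one>\<^bsub>G\<^esub>) \<and>
     (\<forall>x\<in>kernel G (add_monoid (Vlie n)) \<phi>. \<forall>y\<in>kernel G (add_monoid (Vlie n)) \<phi>.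
         x \<otimes>\<^bsub>G\<^esub> y = y \<otimes>\<^bsub>G\<^esub> x) \<and>
     (\<forall>x\<in>kernel G (add_monoid (Vlie n)) \<phi>. x \<otimes>\<^bsub>G\<^esub> x = \<one>\<^bsub>G\<^esub>) \<and>
     Gamma G 2 = kernel G (add_monoid (Vlie n)) \<phi>"

text \<open>An element of L(G) = \<Oplus>_{m\<ge>1} G^(m)/G^(m+1) is a function f on nat with
  f m a coset of G^(m+1) in G^(m) (m \<ge> 1), f 0 = G^(1) as a dummy value, and
  f m = G^(m+1) (the zero coset) for all but finitely many m.\<close>

definition LG_carrier :: "('g, 'b) monoid_scheme \<Rightarrow> (nat \<Rightarrow> 'g set) set" where
  "LG_carrier G = {f. f 0 = Gamma G 1 \<and>
      (\<forall>m\<ge>1. f m \<in> {Gamma G (m + 1) #>\<^bsub>G\<^esub> a | a. a \<in> Gamma G m}) \<and>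
      finite {m. f m \<noteq> Gamma G (m + 1)}}"

definition LG_zero :: "('g, 'b) monoid_scheme \<Rightarrow> nat \<Rightarrow> 'g set" where
  "LG_zero G = (\<lambda>m. Gamma G (m + 1))"

definition LG_add :: "('g, 'b) monoid_scheme \<Rightarrow> (nat \<Rightarrow> 'g set) \<Rightarrow> (nat \<Rightarrow> 'g set) \<Rightarrow> nat \<Rightarrow> 'g set" where
  "LG_add G f f' = (\<lambda>m. f m <#>\<^bsub>G\<^esub> f' m)"

text \<open>Bracket of a class in degree h with a class in degree k: class of the group commutator in degree h+k.\<close>
definition coset_comm :: "('g, 'b) monoid_scheme \<Rightarrow> nat \<Rightarrow> nat \<Rightarrow> 'g set \<Rightarrow> 'g set \<Rightarrow> 'g set" where
  "coset_comm G h k A B =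
     {commutator G x y | x y. x \<in> A \<and> y \<in> B} <#>\<^bsub>G\<^esub> Gamma G (h + k + 1)"

definition LG_bracket :: "('g, 'b) monoid_scheme \<Rightarrow> (nat \<Rightarrow> 'g set) \<Rightarrow> (nat \<Rightarrow> 'g set) \<Rightarrow> nat \<Rightarrow> 'g set" where
  "LG_bracket G f f' = (\<lambda>m.
     foldr (\<lambda>h acc. coset_comm G h (m - h) (f h) (f' (m - h)) <#>\<^bsub>G\<^esub> acc) [1..<m] (Gamma G (m + 1)))"

definition LG :: "('g, 'b) monoid_scheme \<Rightarrow> (nat \<Rightarrow> 'g set) ring" where
  "LG G = \<lparr>carrier = LG_carrier G, monoid.mult = LG_bracket G, monoid.one = LG_zero G,
           ring.zero = LG_zero G, ring.add = LG_add G\<rparr>"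

definition LG_comp :: "('g, 'b) monoid_scheme \<Rightarrow> nat \<Rightarrow> (nat \<Rightarrow> 'g set) set" where
  "LG_comp G m = {f \<in> LG_carrier G. \<forall>k. k \<noteq> m \<longrightarrow> f k = Gamma G (k + 1)}"

text \<open>L(\<phi>): in degree 1 the map G/G^(2) \<rightarrow> V induced by \<phi>; zero in degrees \<ge> 2
  (since L_m(V) = 0 for m \<ge> 2 and L_1(V) = V).\<close>
definition Lphi :: "('g, 'b) monoid_scheme \<Rightarrow> ('g \<Rightarrow> nat set) \<Rightarrow> (nat \<Rightarrow> 'g set) \<Rightarrow> nat set" where
  "Lphi G \<phi> f = \<phi> (SOME x. x \<in> f 1)"

text \<open>A Lie algebra over F_2 is encoded as a ring record: add/zero is the vector
  space structure (an abelian group of exponent 2), mult is the Lie bracket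
  (one is unused). cmp m is the degree-m component (cmp 0 = {0}).\<close>

definition graded_lie_F2 :: "('a, 'c) ring_scheme \<Rightarrow> (nat \<Rightarrow> 'a set) \<Rightarrow> bool" where
  "graded_lie_F2 L cmp \<longleftrightarrow>
     abelian_group L \<and>
     (\<forall>x\<in>carrier L. x \<oplus>\<^bsub>L\<^esub> x = \<zero>\<^bsub>L\<^esub>) \<and>
     (\<forall>x\<in>carrier L. \<forall>y\<in>carrier L. x \<otimes>\<^bsub>L\<^esub> y \<in> carrier L) \<and>
     (\<forall>x\<in>carrier L. \<forall>y\<in>carrier L. \<forall>z\<in>carrier L.
        (x \<oplus>\<^bsub>L\<^esub> y) \<otimes>\<^bsub>L\<^esub> z = x \<otimes>\<^bsub>L\<^esub> z \<oplus>\<^bsub>L\<^esub> y \<otimes>\<^bsub>L\<^esub> z \<and>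
        z \<otimes>\<^bsub>L\<^esub> (x \<oplus>\<^bsub>L\<^esub> y) = z \<otimes>\<^bsub>L\<^esub> x \<oplus>\<^bsub>L\<^esub> z \<otimes>\<^bsub>L\<^esub> y) \<and>
     (\<forall>x\<in>carrier L. x \<otimes>\<^bsub>L\<^esub> x = \<zero>\<^bsub>L\<^esub>) \<and>
     (\<forall>x\<in>carrier L. \<forall>y\<in>carrier L. \<forall>z\<in>carrier L.
        x \<otimes>\<^bsub>L\<^esub> (y \<otimes>\<^bsub>L\<^esub> z) \<oplus>\<^bsub>L\<^esub> y \<otimes>\<^bsub>L\<^esub> (z \<otimes>\<^bsub>L\<^esub> x) \<oplus>\<^bsub>L\<^esub> z \<otimes>\<^bsub>L\<^esub> (x \<otimes>\<^bsub>L\<^esub> y) = \<zero>\<^bsub>L\<^esub>) \<and>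
     cmp 0 = {\<zero>\<^bsub>L\<^esub>} \<and>
     (\<forall>m. subgroup (cmp m) (add_monoid L)) \<and>
     (\<forall>h k x y. x \<in> cmp h \<longrightarrow> y \<in> cmp k \<longrightarrow> x \<otimes>\<^bsub>L\<^esub> y \<in> cmp (h + k)) \<and>
     (\<forall>x\<in>carrier L. \<exists>!c. (\<forall>m. c m \<in> cmp m) \<and> finite {m. c m \<noteq> \<zero>\<^bsub>L\<^esub>} \<and>
        x = (\<Oplus>\<^bsub>L\<^esub>m\<in>{m. c m \<noteq> \<zero>\<^bsub>L\<^esub>}. c m))"

definition graded_lie_hom ::
  "('a, 'c) ring_scheme \<Rightarrow> (nat \<Rightarrow> 'a set) \<Rightarrow> ('e, 'd) ring_scheme \<Rightarrow> (nat \<Rightarrow> 'e set) \<Rightarrow> ('a \<Rightarrow> 'e) \<Rightarrow> bool" where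
  "graded_lie_hom L cL M cM \<psi> \<longleftrightarrow>
     \<psi> \<in> carrier L \<rightarrow> carrier M \<and>
     (\<forall>x\<in>carrier L. \<forall>y\<in>carrier L. \<psi> (x \<oplus>\<^bsub>L\<^esub> y) = \<psi> x \<oplus>\<^bsub>M\<^esub> \<psi> y) \<and>
     (\<forall>x\<in>carrier L. \<forall>y\<in>carrier L. \<psi> (x \<otimes>\<^bsub>L\<^esub> y) = \<psi> x \<otimes>\<^bsub>M\<^esub> \<psi> y) \<and>
     (\<forall>m. \<psi> ` cL m \<subseteq> cM m)"

fun nest :: "('a, 'c) ring_scheme \<Rightarrow> 'a list \<Rightarrow> 'a" where
  "nest L [] = \<zero>\<^bsub>L\<^esub>"
| "nest L [x] = x"
| "nest L (x # y # xs) = x \<otimes>\<^bsub>L\<^esub> nest L (y # xs)"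

definition lie_kernel :: "('a, 'c) ring_scheme \<Rightarrow> ('a \<Rightarrow> nat set) \<Rightarrow> 'a set" where
  "lie_kernel L \<psi> = {x \<in> carrier L. \<psi> x = {}}"

definition expansion_lie ::
  "nat \<Rightarrow> ('a, 'c) ring_scheme \<Rightarrow> (nat \<Rightarrow> 'a set) \<Rightarrow> ('a \<Rightarrow> nat set) \<Rightarrow> bool" where
  "expansion_lie n L cmp \<psi> \<longleftrightarrow>
     \<comment> \<open>(1)\<close>
     graded_lie_F2 L cmp \<and>
     graded_lie_hom L cmp (Vlie n) (Vcomp n) \<psi> \<and>
     \<psi> ` carrier L = carrier (Vlie n) \<and>
     \<comment> \<open>(2) kernel is an abelian subalgebra\<close>
     subgroup (lie_kernel L \<psi>) (add_monoid L) \<and>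
     (\<forall>x\<in>lie_kernel L \<psi>. \<forall>y\<in>lie_kernel L \<psi>. x \<otimes>\<^bsub>L\<^esub> y = \<zero>\<^bsub>L\<^esub>) \<and>
     \<comment> \<open>(3) [L,L] (the span of all brackets) equals the kernel\<close>
     generate (add_monoid L) {x \<otimes>\<^bsub>L\<^esub> y | x y. x \<in> carrier L \<and> y \<in> carrier L} = lie_kernel L \<psi> \<and>
     \<comment> \<open>(4) for i = length ps + 2 \<ge> 4\<close>
     (\<forall>ps qs a b. 2 \<le> length ps \<longrightarrow> set ps \<subseteq> cmp 1 \<longrightarrow> set qs \<subseteq> cmp 1 \<longrightarrow>
        a \<in> cmp 1 \<longrightarrow> b \<in> cmp 1 \<longrightarrow> mset ps = mset qs \<longrightarrow>
        nest L (ps @ [a, b]) = nest L (qs @ [a, b])) \<and>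
     (\<forall>ps a b. 2 \<le> length ps \<longrightarrow> set ps \<subseteq> cmp 1 \<longrightarrow>
        a \<in> cmp 1 \<longrightarrow> b \<in> cmp 1 \<longrightarrow> \<not> distinct ps \<longrightarrow>
        nest L (ps @ [a, b]) = \<zero>\<^bsub>L\<^esub>) \<and>
     (\<forall>t1\<in>cmp 1. \<forall>t2\<in>cmp 1. \<psi> t1 \<in> basis_vec ` {1..n} \<longrightarrow>
        t1 \<otimes>\<^bsub>L\<^esub> (t1 \<otimes>\<^bsub>L\<^esub> t2) = \<zero>\<^bsub>L\<^esub>)"

end

theory Submission
  imports Defs
begin

(* In an expansion group the derived subgroup G' = ker phi is an elementary abelian 2-group
   and every square lies in G', so G acts on G' by conjugation through the elementary abelian
   2-group G/G'. This is all the Lie algebra part uses: for u in G' one gets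
   [x,[y,u]] = [y,[x,u]] and [x,[x,u]] = 1, and expanding [ab,d] in two ways gives the group
   Jacobi identity [a,[b,d]] [b,[d,a]] [d,[a,b]] = 1.

   Elements of L(G) are handled through sequences of representatives r_k in G^(k), almost all
   trivial. The bracket is computed on representatives, and commutator calculus modulo the lower
   central series makes it well defined, bilinear and alternating. As every element is a finite
   sum of homogeneous ones, the Jacobi identity reduces to the group Jacobi identity, and the
   conditions on nested brackets [s_1,[s_2,...,[s_(i-1),s_i]]] reduce to the two identities above.
   The kernel of L(phi) consists of the elements whose degree-one component vanishes, and these
   are sums of brackets. Finally, if phi(x) = e_i then x = g_i a with a in G' and g_i^2 = 1, so
   x^2 = [g_i,a] lies in G^(3), and [x,[x,y]] = [x^2,y] vanishes in degree 3. *)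

section \<open>Commutators and the lower central series\<close>

declare lcs.simps(2) [simp del]

context group
begin

lemma mult_inv_cancel_left [simp]: "x \<in> carrier G \<Longrightarrow> y \<in> carrier G \<Longrightarrow> x \<otimes> (inv x \<otimes> y) = y"
  by (simp add: m_assoc [symmetric])

lemma inv_mult_cancel_left [simp]: "x \<in> carrier G \<Longrightarrow> y \<in> carrier G \<Longrightarrow> inv x \<otimes> (x \<otimes> y) = y"
  by (simp add: m_assoc [symmetric])

lemmas group_assoc_simps = m_assoc inv_mult_group

abbreviation comm :: "'a \<Rightarrow> 'a \<Rightarrow> 'a" where
  "comm x y \<equiv> commutator G x y"

lemma commutator_closed [simp]: "x \<in> carrier G \<Longrightarrow> y \<in> carrier G \<Longrightarrow> comm x y \<in> carrier G"
  by (simp add: commutator_def)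

lemma inv_commutator: "x \<in> carrier G \<Longrightarrow> y \<in> carrier G \<Longrightarrow> inv (comm x y) = comm y x"
  by (simp add: commutator_def group_assoc_simps)

lemma commutator_self [simp]: "x \<in> carrier G \<Longrightarrow> comm x x = \<one>"
  by (simp add: commutator_def group_assoc_simps)

lemma commutator_one_left [simp]: "y \<in> carrier G \<Longrightarrow> comm \<one> y = \<one>"
  by (simp add: commutator_def)

lemma commutator_one_right [simp]: "x \<in> carrier G \<Longrightarrow> comm x \<one> = \<one>"
  by (simp add: commutator_def group_assoc_simps)

lemma commutator_mult_left:
  "x \<in> carrier G \<Longrightarrow> x' \<in> carrier G \<Longrightarrow> y \<in> carrier G \<Longrightarrow>
   comm (x \<otimes> x') y = (x \<otimes> comm x' y \<otimes> inv x) \<otimes> comm x y"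
  by (simp add: commutator_def group_assoc_simps)

lemma conj_commutator:
  "x \<in> carrier G \<Longrightarrow> h \<in> carrier G \<Longrightarrow> y \<in> carrier G \<Longrightarrow>
   h \<otimes> comm x y \<otimes> inv h = comm (h \<otimes> x \<otimes> inv h) (h \<otimes> y \<otimes> inv h)"
  by (simp add: commutator_def group_assoc_simps)

lemma mult_eq_commutator_mult_swap:
  "x \<in> carrier G \<Longrightarrow> y \<in> carrier G \<Longrightarrow> x \<otimes> y = comm x y \<otimes> (y \<otimes> x)"
  by (simp add: commutator_def group_assoc_simps)

lemma generate_conj_closed:
  assumes S: "S \<subseteq> carrier G"
    and conj_S: "\<And>x s. x \<in> carrier G \<Longrightarrow> s \<in> S \<Longrightarrow> x \<otimes> s \<otimes> inv x \<in> S"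
    and h: "h \<in> generate G S" and x: "x \<in> carrier G"
  shows "x \<otimes> h \<otimes> inv x \<in> generate G S"
  using h
proof induction
  case one
  then show ?case using x by (simp add: generate.one)
next
  case (incl h)
  then show ?case using conj_S x by (simp add: generate.incl)
next
  case (inv h)
  have "h \<in> carrier G" using inv S by auto
  then have "x \<otimes> inv h \<otimes> inv x = inv (x \<otimes> h \<otimes> inv x)"
    using x by (simp add: group_assoc_simps)
  then show ?case using generate.inv [OF conj_S [OF x inv]] by simp
next
  case (eng h1 h2)
  have "h1 \<in> carrier G" "h2 \<in> carrier G" using eng generate_in_carrier [OF S] by auto
  then have "x \<otimes> (h1 \<otimes> h2) \<otimes> inv x = (x \<otimes> h1 \<otimes> inv x) \<otimes> (x \<otimes> h2 \<otimes> inv x)"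
    using x by (simp add: group_assoc_simps)
  then show ?case using generate.eng [OF eng.IH] by simp
qed

lemma lcs_Suc: "lcs G (Suc k) = generate G {comm x y | x y. x \<in> carrier G \<and> y \<in> lcs G k}"
  by (simp add: lcs.simps(2))

lemma normal_lcs: "lcs G k \<lhd> G"
proof (induction k)
  case 0
  then show ?case by (simp add: normal_inv_iff subgroup_self)
next
  case (Suc k)
  define S where "S = {comm x y | x y. x \<in> carrier G \<and> y \<in> lcs G k}"
  have sub: "lcs G k \<subseteq> carrier G" using subgroup.subset [OF normal_imp_subgroup [OF Suc]] .
  then have S: "S \<subseteq> carrier G" by (auto simp: S_def)
  have conj_S: "x \<otimes> s \<otimes> inv x \<in> S" if x: "x \<in> carrier G" and s: "s \<in> S" for x s
  proof -
    obtain a b where ab: "s = comm a b" "a \<in> carrier G" "b \<in> lcs G k" using s unfolding S_def by blast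
    have "x \<otimes> b \<otimes> inv x \<in> lcs G k" using Suc x ab(3) by (simp add: normal_inv_iff)
    then show ?thesis using conj_commutator [OF ab(2) x] ab x sub unfolding S_def by blast
  qed
  show ?case unfolding lcs_Suc S_def [symmetric] normal_inv_iff
    using generate_is_subgroup [OF S] generate_conj_closed [OF S conj_S] by blast
qed

lemma subgroup_lcs: "subgroup (lcs G k) G"
  by (rule normal_imp_subgroup [OF normal_lcs])

lemma lcs_in_carrier [simp]: "x \<in> lcs G k \<Longrightarrow> x \<in> carrier G"
  by (rule subgroup.mem_carrier [OF subgroup_lcs])

lemma lcs_one [simp]: "\<one> \<in> lcs G k"
  by (rule subgroup.one_closed [OF subgroup_lcs])

lemma lcs_mult [simp]: "x \<in> lcs G k \<Longrightarrow> y \<in> lcs G k \<Longrightarrow> x \<otimes> y \<in> lcs G k"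
  by (rule subgroup.m_closed [OF subgroup_lcs])

lemma lcs_inv [simp]: "x \<in> lcs G k \<Longrightarrow> inv x \<in> lcs G k"
  by (rule subgroup.m_inv_closed [OF subgroup_lcs])

lemma lcs_conj [simp]: "h \<in> carrier G \<Longrightarrow> x \<in> lcs G k \<Longrightarrow> h \<otimes> x \<otimes> inv h \<in> lcs G k"
  using normal_lcs by (simp add: normal_inv_iff)

lemma commutator_in_lcs_Suc: "x \<in> carrier G \<Longrightarrow> y \<in> lcs G k \<Longrightarrow> comm x y \<in> lcs G (Suc k)"
  unfolding lcs_Suc by (rule generate.incl) blast

lemma commutator_in_lcs_Suc': "x \<in> carrier G \<Longrightarrow> y \<in> lcs G k \<Longrightarrow> comm y x \<in> lcs G (Suc k)"
  using lcs_inv [OF commutator_in_lcs_Suc] inv_commutator by (metis lcs_in_carrier)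

lemma lcs_Suc_subset: "lcs G (Suc k) \<subseteq> lcs G k"
proof -
  have "{comm x y | x y. x \<in> carrier G \<and> y \<in> lcs G k} \<subseteq> lcs G k"
  proof clarify
    fix a b assume "a \<in> carrier G" "b \<in> lcs G k"
    then have "a \<otimes> b \<otimes> inv a \<otimes> inv b \<in> lcs G k" by simp
    then show "comm a b \<in> lcs G k" by (simp add: commutator_def)
  qed
  then show ?thesis unfolding lcs_Suc by (rule generate_subgroup_incl [OF _ subgroup_lcs])
qed

lemma lcs_antimono: "i \<le> j \<Longrightarrow> lcs G j \<subseteq> lcs G i"
  by (induction j rule: dec_induct) (use lcs_Suc_subset in blast)+

lemma rcos_eq_iff:
  assumes "subgroup H G" "a \<in> carrier G" "b \<in> carrier G"
  shows "H #> a = H #> b \<longleftrightarrow> a \<otimes> inv b \<in> H"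
  using subgroup.rcos_module [OF assms(1) is_group assms(3,2)] rcos_self [OF assms(2,1)]
    repr_independence [OF _ assms(3,1)] by metis

lemma lcs_rcos_mult:
  "a \<in> carrier G \<Longrightarrow> b \<in> carrier G \<Longrightarrow> (lcs G k #> a) <#> (lcs G k #> b) = lcs G k #> (a \<otimes> b)"
  by (rule normal.rcos_sum [OF normal_lcs])

lemma lcs_subset_carrier [simp]: "lcs G k \<subseteq> carrier G"
  by (rule subgroup.subset [OF subgroup_lcs])

lemma lcs_rcos_const: "t \<in> lcs G k \<Longrightarrow> lcs G k #> t = lcs G k"
  by (rule subgroup.rcos_const [OF subgroup_lcs is_group])

lemma lcs_rcos_absorb: "t \<in> lcs G k \<Longrightarrow> a \<in> carrier G \<Longrightarrow> lcs G k #> (t \<otimes> a) = lcs G k #> a"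
  by (simp add: rcos_eq_iff [OF subgroup_lcs] m_assoc)

lemma set_mult_normal_eq_rcos:
  assumes N: "N \<lhd> G" and c: "c \<in> S" and S: "\<And>s. s \<in> S \<Longrightarrow> s \<in> carrier G \<and> N #> s = N #> c"
  shows "S <#> N = N #> c"
proof -
  have H: "subgroup N G" using normal_imp_subgroup [OF N] .
  have cG: "c \<in> carrier G" using S [OF c] by blast
  show ?thesis
  proof
    show "S <#> N \<subseteq> N #> c"
    proof
      fix z assume "z \<in> S <#> N"
      then obtain s t where st: "s \<in> S" "t \<in> N" "z = s \<otimes> t" unfolding set_mult_def by blast
      have s: "s \<in> carrier G" "N #> s = N #> c" using S [OF st(1)] by auto
      have t: "t \<in> carrier G" using subgroup.mem_carrier [OF H st(2)] .
      have "N #> z = (N #> s) <#> (N #> t)" using s(1) t st(3) by (simp add: normal.rcos_sum [OF N])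
      also have "\<dots> = (N #> c) <#> (N #> \<one>)"
        using s(2) subgroup.rcos_const [OF H is_group st(2)] subgroup.rcos_const [OF H is_group, of \<one>]
          subgroup.one_closed [OF H] by simp
      also have "\<dots> = N #> c" using cG by (simp add: normal.rcos_sum [OF N] del: coset_mult_one)
      finally show "z \<in> N #> c"
        using rcos_self [OF _ H, of z] s t st(3) by simp
    qed
  next
    show "N #> c \<subseteq> S <#> N"
    proof
      fix z assume "z \<in> N #> c"
      then obtain t where t: "t \<in> N" "z = t \<otimes> c" unfolding r_coset_def by blast
      have tG: "t \<in> carrier G" using subgroup.mem_carrier [OF H t(1)] .
      have "inv c \<otimes> t \<otimes> inv (inv c) \<in> N" using N t(1) inv_closed [OF cG] unfolding normal_inv_iff by blast
      moreover have "z = c \<otimes> (inv c \<otimes> t \<otimes> inv (inv c))"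
        using t tG cG by (simp add: m_assoc)
      ultimately show "z \<in> S <#> N" using c unfolding set_mult_def by blast
    qed
  qed
qed

definition conjugate :: "'a \<Rightarrow> 'a \<Rightarrow> 'a" where
  "conjugate x u = x \<otimes> u \<otimes> inv x"

lemma conjugate_mult: "x \<in> carrier G \<Longrightarrow> y \<in> carrier G \<Longrightarrow> u \<in> carrier G \<Longrightarrow>
  conjugate (x \<otimes> y) u = conjugate x (conjugate y u)"
  by (simp add: conjugate_def group_assoc_simps)

lemma conjugate_mult_distrib: "x \<in> carrier G \<Longrightarrow> u \<in> carrier G \<Longrightarrow> v \<in> carrier G \<Longrightarrow>
  conjugate x (u \<otimes> v) = conjugate x u \<otimes> conjugate x v"
  by (simp add: conjugate_def group_assoc_simps)

lemma commutator_mult_left_conjugate: "x \<in> carrier G \<Longrightarrow> x' \<in> carrier G \<Longrightarrow> y \<in> carrier G \<Longrightarrow>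
  comm (x \<otimes> x') y = conjugate x (comm x' y) \<otimes> comm x y"
  by (simp add: commutator_mult_left conjugate_def)

text \<open>The simplifier rewrites \<open>1 :: nat\<close> to \<open>Suc 0\<close>, so this is the form in which \<open>lcs G 1\<close> occurs.\<close>
lemma lcs_Suc_0 [simp]: "lcs G (Suc 0) = derived G (carrier G)"
  unfolding lcs_Suc derived_def commutator_def by (rule arg_cong [where f = "generate G"]) auto

lemma subgroup_derived: "subgroup (derived G (carrier G)) G"
  using subgroup_lcs [of 1] by simp

lemma derived_imp_carrier [simp]: "x \<in> derived G (carrier G) \<Longrightarrow> x \<in> carrier G"
  by (rule subgroup.mem_carrier [OF subgroup_derived])

lemma derived_one [simp]: "\<one> \<in> derived G (carrier G)"
  by (rule subgroup.one_closed [OF subgroup_derived])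

lemma derived_mult [simp]:
  "x \<in> derived G (carrier G) \<Longrightarrow> y \<in> derived G (carrier G) \<Longrightarrow> x \<otimes> y \<in> derived G (carrier G)"
  by (rule subgroup.m_closed [OF subgroup_derived])

lemma derived_conj [simp]:
  "h \<in> carrier G \<Longrightarrow> x \<in> derived G (carrier G) \<Longrightarrow> h \<otimes> x \<otimes> inv h \<in> derived G (carrier G)"
  using lcs_conj [of h x 1] by simp

lemma commutator_in_derived [simp]: "x \<in> carrier G \<Longrightarrow> y \<in> carrier G \<Longrightarrow> comm x y \<in> derived G (carrier G)"
  using commutator_in_lcs_Suc [of x y 0] by simp

end

section \<open>Groups with elementary abelian derived subgroup and abelianization\<close>

locale exp2_metabelian_group = group G for G (structure) +
  assumes derived_commute:
      "x \<in> derived G (carrier G) \<Longrightarrow> y \<in> derived G (carrier G) \<Longrightarrow> x \<otimes> y = y \<otimes> x"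
    and derived_square [simp]: "x \<in> derived G (carrier G) \<Longrightarrow> x \<otimes> x = \<one>"
    and square_in_derived [simp]: "x \<in> carrier G \<Longrightarrow> x \<otimes> x \<in> derived G (carrier G)"
begin

abbreviation G' :: "'a set" where
  "G' \<equiv> derived G (carrier G)"

lemma derived_inv [simp]: "x \<in> G' \<Longrightarrow> inv x = x"
  using inv_equality [OF derived_square] by (metis derived_imp_carrier)

lemma derived_left_commute: "x \<in> G' \<Longrightarrow> y \<in> G' \<Longrightarrow> z \<in> carrier G \<Longrightarrow> x \<otimes> (y \<otimes> z) = y \<otimes> (x \<otimes> z)"
  by (metis derived_commute derived_imp_carrier m_assoc)

lemma derived_square_left [simp]: "x \<in> G' \<Longrightarrow> y \<in> carrier G \<Longrightarrow> x \<otimes> (x \<otimes> y) = y"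
  by (simp add: m_assoc [symmetric])

lemmas derived_ac = derived_commute derived_left_commute

lemma lcs_subset_derived: "1 \<le> k \<Longrightarrow> x \<in> lcs G k \<Longrightarrow> x \<in> G'"
  using lcs_antimono [of 1 k] by auto

lemma commutator_derived_derived: "x \<in> G' \<Longrightarrow> y \<in> G' \<Longrightarrow> comm x y = \<one>"
  by (simp add: commutator_def m_assoc derived_left_commute [of y x])

text \<open>For \<open>i, j \<ge> 1\<close> this holds because \<open>G'\<close> is abelian.\<close>
lemma commutator_in_lcs_add: "x \<in> lcs G i \<Longrightarrow> y \<in> lcs G j \<Longrightarrow> comm x y \<in> lcs G (i + j + 1)"
proof -
  assume x: "x \<in> lcs G i" and y: "y \<in> lcs G j"
  consider "i = 0" | "j = 0" | "1 \<le> i" "1 \<le> j" by linarith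
  then show ?thesis
  proof cases
    case 1
    then show ?thesis using commutator_in_lcs_Suc [of x y j] x y by simp
  next
    case 2
    then show ?thesis using commutator_in_lcs_Suc' [of y x i] x y by simp
  next
    case 3
    then have "comm x y = \<one>"
      using lcs_subset_derived [of i x] lcs_subset_derived [of j y] x y
      by (simp add: commutator_derived_derived)
    then show ?thesis by simp
  qed
qed

lemma commutator_derived: "x \<in> carrier G \<Longrightarrow> u \<in> G' \<Longrightarrow> comm x u = conjugate x u \<otimes> u"
  by (simp add: conjugate_def commutator_def)

lemma conjugate_derived [simp]: "x \<in> carrier G \<Longrightarrow> u \<in> G' \<Longrightarrow> conjugate x u \<in> G'"
  by (simp add: conjugate_def)

lemma conjugate_by_derived: "a \<in> G' \<Longrightarrow> u \<in> G' \<Longrightarrow> conjugate a u = u"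
  by (simp add: conjugate_def derived_commute [of a u] m_assoc)

text \<open>Conjugation acts on \<open>G'\<close> through the elementary abelian \<open>2\<close>-group \<open>G / G'\<close>.\<close>
lemma conjugate_commute: assumes "x \<in> carrier G" "y \<in> carrier G" "u \<in> G'"
  shows "conjugate x (conjugate y u) = conjugate y (conjugate x u)"
proof -
  have "conjugate x (conjugate y u) = conjugate (comm x y) (conjugate (y \<otimes> x) u)"
    using assms by (simp add: conjugate_mult [symmetric] mult_eq_commutator_mult_swap [of x y])
  also have "\<dots> = conjugate y (conjugate x u)"
    using assms by (simp add: conjugate_by_derived conjugate_mult)
  finally show ?thesis .
qed

lemma conjugate_involution: "x \<in> carrier G \<Longrightarrow> u \<in> G' \<Longrightarrow> conjugate x (conjugate x u) = u"
  using conjugate_mult [of x x u, symmetric] conjugate_by_derived [OF square_in_derived [of x]] by simp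

lemma commutator_left_commute: assumes "x \<in> carrier G" "y \<in> carrier G" "u \<in> G'"
  shows "comm x (comm y u) = comm y (comm x u)"
proof -
  have "comm x (comm y u) = conjugate x (conjugate y u) \<otimes> conjugate x u \<otimes> (conjugate y u \<otimes> u)"
    using assms by (simp add: commutator_derived conjugate_mult_distrib)
  also have "\<dots> = conjugate y (conjugate x u) \<otimes> conjugate y u \<otimes> (conjugate x u \<otimes> u)"
    using assms by (simp add: conjugate_commute m_assoc derived_ac)
  also have "\<dots> = comm y (comm x u)"
    using assms by (simp add: commutator_derived conjugate_mult_distrib)
  finally show ?thesis .
qed

lemma commutator_commutator_self: assumes "x \<in> carrier G" "u \<in> G'"
  shows "comm x (comm x u) = \<one>"
proof -
  have "comm x (comm x u) = conjugate x (conjugate x u) \<otimes> conjugate x u \<otimes> (conjugate x u \<otimes> u)"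
    using assms by (simp add: commutator_derived conjugate_mult_distrib)
  also have "\<dots> = u \<otimes> (conjugate x u \<otimes> (conjugate x u \<otimes> u))"
    using assms by (simp add: conjugate_involution m_assoc)
  finally show ?thesis using assms by simp
qed

lemma commutator_commute: "x \<in> carrier G \<Longrightarrow> y \<in> carrier G \<Longrightarrow> comm x y = comm y x"
  using inv_commutator [of y x] commutator_in_derived [of y x] by simp

lemma commutator_square_left: "x \<in> carrier G \<Longrightarrow> y \<in> carrier G \<Longrightarrow> comm x (comm x y) = comm (x \<otimes> x) y"
  by (simp add: commutator_mult_left_conjugate commutator_derived)

text \<open>Expand \<open>[a b, d]\<close> directly and through \<open>a b = [a, b] b a\<close>.\<close>
lemma jacobi_commutator: assumes a: "a \<in> carrier G" "b \<in> carrier G" "d \<in> carrier G"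
  shows "comm a (comm b d) \<otimes> comm b (comm d a) \<otimes> comm d (comm a b) = \<one>"
proof -
  define u where "u = comm b d"
  define v where "v = comm d a"
  define w where "w = comm a b"
  have uvw: "u \<in> G'" "v \<in> G'" "w \<in> G'" using a by (auto simp: u_def v_def w_def)
  have direct: "comm (a \<otimes> b) d = conjugate a u \<otimes> v"
    using a by (simp add: commutator_mult_left_conjugate u_def v_def commutator_commute [of a d])
  have "comm (a \<otimes> b) d = comm (w \<otimes> (b \<otimes> a)) d"
    using a by (simp add: w_def mult_eq_commutator_mult_swap [of a b])
  also have "\<dots> = conjugate w (comm (b \<otimes> a) d) \<otimes> comm w d"
    using a uvw by (simp add: commutator_mult_left_conjugate)
  also have "\<dots> = comm (b \<otimes> a) d \<otimes> comm d w"
    using a uvw by (simp add: conjugate_by_derived commutator_commute [of w d])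
  also have "\<dots> = conjugate b v \<otimes> u \<otimes> comm d w"
    using a by (simp add: commutator_mult_left_conjugate u_def v_def commutator_commute [of a d])
  finally have swapped: "conjugate a u \<otimes> v = conjugate b v \<otimes> u \<otimes> comm d w"
    using direct by simp
  have "comm a (comm b d) \<otimes> comm b (comm d a) \<otimes> comm d (comm a b)
      = (conjugate a u \<otimes> v) \<otimes> (conjugate b v \<otimes> u \<otimes> comm d w)"
    using a uvw by (simp add: u_def [symmetric] v_def [symmetric] w_def [symmetric]
        commutator_derived m_assoc derived_ac)
  also have "\<dots> = \<one>" using swapped a uvw by simp
  finally show ?thesis .
qed

lemma square_in_lcs: assumes "1 \<le> k" "a \<in> lcs G (k - 1)" shows "a \<otimes> a \<in> lcs G k"
proof (cases "k = 1")
  case True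
  then show ?thesis using assms by simp
next
  case False
  then have "a \<in> G'" using assms lcs_subset_derived [of "k - 1" a] by simp
  then show ?thesis by simp
qed

lemma lcs_rcos_mult_commute: assumes "1 \<le> k" "a \<in> lcs G (k - 1)" "b \<in> lcs G (k - 1)"
  shows "lcs G k #> (a \<otimes> b) = lcs G k #> (b \<otimes> a)"
proof -
  have "comm a b \<in> lcs G (k - 1 + (k - 1) + 1)" using commutator_in_lcs_add assms by blast
  moreover have "lcs G (k - 1 + (k - 1) + 1) \<subseteq> lcs G k" using assms lcs_antimono by simp
  ultimately have "comm a b \<in> lcs G k" by blast
  then show ?thesis
    using assms by (subst rcos_eq_iff [OF subgroup_lcs]) (auto simp: commutator_def group_assoc_simps)
qed

lemma lcs_rcos_commutator_mult_left: assumes "x \<in> lcs G i" "x' \<in> lcs G i" "y \<in> lcs G j"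
  shows "lcs G (i + j + 2) #> comm (x \<otimes> x') y = lcs G (i + j + 2) #> (comm x y \<otimes> comm x' y)"
proof -
  define u where "u = comm x' y"
  have u: "u \<in> lcs G (i + j + 1)" using commutator_in_lcs_add assms by (simp add: u_def)
  then have u': "u \<in> G'" using lcs_subset_derived [of "i + j + 1" u] by simp
  have c: "x \<in> carrier G" "x' \<in> carrier G" "y \<in> carrier G" using assms by auto
  have "conjugate x u = comm x u \<otimes> u" using commutator_derived [OF c(1) u'] c u' by (simp add: m_assoc)
  then have "comm (x \<otimes> x') y = comm x u \<otimes> (u \<otimes> comm x y)"
    using c u' by (simp add: commutator_mult_left_conjugate u_def [symmetric] m_assoc)
  moreover have "comm x u \<in> lcs G (i + j + 2)" using commutator_in_lcs_Suc [OF c(1) u] by simp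
  ultimately have "lcs G (i + j + 2) #> comm (x \<otimes> x') y = lcs G (i + j + 2) #> (u \<otimes> comm x y)"
    using c u' by (simp add: lcs_rcos_absorb)
  then show ?thesis using c u' by (simp add: u_def derived_commute)
qed

lemma lcs_rcos_commutator_mult_right: assumes "x \<in> lcs G i" "y \<in> lcs G j" "y' \<in> lcs G j"
  shows "lcs G (i + j + 2) #> comm x (y \<otimes> y') = lcs G (i + j + 2) #> (comm x y \<otimes> comm x y')"
  using lcs_rcos_commutator_mult_left [OF assms(2,3,1)] assms
  by (simp add: commutator_commute [of x] add.commute)

lemma lcs_rcos_commutator_cong:
  assumes hk: "1 \<le> h" "1 \<le> k" and a: "a \<in> lcs G (h - 1)" and b: "b \<in> lcs G (k - 1)"
    and x: "x \<in> lcs G h #> a" and y: "y \<in> lcs G k #> b"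
  shows "lcs G (h + k) #> comm x y = lcs G (h + k) #> comm a b"
proof -
  obtain s where s: "s \<in> lcs G h" "x = s \<otimes> a" using x unfolding r_coset_def by blast
  obtain t where t: "t \<in> lcs G k" "y = t \<otimes> b" using y unfolding r_coset_def by blast
  have s': "s \<in> lcs G (h - 1)" using s lcs_antimono [of "h - 1" h] by auto
  have t': "t \<in> lcs G (k - 1)" using t lcs_antimono [of "k - 1" k] by auto
  have y': "y \<in> lcs G (k - 1)" using t t' b by simp
  have e: "h - 1 + (k - 1) + 2 = h + k" using hk by simp
  have "lcs G (h + k) #> comm x y = lcs G (h + k) #> (comm s y \<otimes> comm a y)"
    using lcs_rcos_commutator_mult_left [OF s' a y', unfolded e] s by simp
  also have "\<dots> = lcs G (h + k) #> comm a y"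
    using commutator_in_lcs_add [OF s(1) y'] hk a y' by (simp add: lcs_rcos_absorb)
  also have "\<dots> = lcs G (h + k) #> (comm a t \<otimes> comm a b)"
    using lcs_rcos_commutator_mult_right [OF a t' b, unfolded e] t by simp
  also have "\<dots> = lcs G (h + k) #> comm a b"
    using commutator_in_lcs_add [OF a t(1)] hk a b by (simp add: lcs_rcos_absorb)
  finally show ?thesis .
qed

lemma coset_comm_lcs_rcos:
  assumes hk: "1 \<le> h" "1 \<le> k" and a: "a \<in> lcs G (h - 1)" and b: "b \<in> lcs G (k - 1)"
  shows "coset_comm G h k (lcs G h #> a) (lcs G k #> b) = lcs G (h + k) #> comm a b"
proof -
  define S where "S = {comm x y | x y. x \<in> lcs G h #> a \<and> y \<in> lcs G k #> b}"
  have ab: "a \<in> carrier G" "b \<in> carrier G" using a b by auto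
  have "comm a b \<in> S"
    unfolding S_def using rcos_self [OF ab(1) subgroup_lcs] rcos_self [OF ab(2) subgroup_lcs] by blast
  moreover have "s \<in> carrier G \<and> lcs G (h + k) #> s = lcs G (h + k) #> comm a b" if "s \<in> S" for s
  proof -
    obtain x y where xy: "s = comm x y" "x \<in> lcs G h #> a" "y \<in> lcs G k #> b"
      using \<open>s \<in> S\<close> by (auto simp: S_def)
    have "x \<in> carrier G" "y \<in> carrier G"
      using xy ab r_coset_subset_G [OF lcs_subset_carrier] by blast+
    then show ?thesis using lcs_rcos_commutator_cong [OF hk a b xy(2,3)] xy by simp
  qed
  ultimately have "S <#> lcs G (h + k) = lcs G (h + k) #> comm a b"
    by (rule set_mult_normal_eq_rcos [OF normal_lcs])
  then show ?thesis by (simp add: coset_comm_def S_def Gamma_def)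
qed

end

section \<open>The Lie algebra of the lower central series\<close>

definition (in group) mult_list :: "('c \<Rightarrow> 'a) \<Rightarrow> 'c list \<Rightarrow> 'a" where
  "mult_list f hs = foldr (\<lambda>h acc. f h \<otimes> acc) hs \<one>"

context group
begin

lemma mult_list_Nil [simp]: "mult_list f [] = \<one>"
  by (simp add: mult_list_def)

lemma mult_list_Cons [simp]: "mult_list f (h # hs) = f h \<otimes> mult_list f hs"
  by (simp add: mult_list_def)

lemma mult_list_in_lcs: "(\<And>h. h \<in> set hs \<Longrightarrow> f h \<in> lcs G k) \<Longrightarrow> mult_list f hs \<in> lcs G k"
  by (induction hs) auto

lemma mult_list_closed [simp]: "(\<And>h. h \<in> set hs \<Longrightarrow> f h \<in> carrier G) \<Longrightarrow> mult_list f hs \<in> carrier G"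
  by (induction hs) auto

lemma mult_list_ones: "(\<And>h. h \<in> set hs \<Longrightarrow> f h = \<one>) \<Longrightarrow> mult_list f hs = \<one>"
  by (induction hs) auto

lemma mult_list_single:
  "distinct hs \<Longrightarrow> (\<And>h. h \<in> set hs \<Longrightarrow> h \<noteq> j \<Longrightarrow> f h = \<one>) \<Longrightarrow> f j \<in> carrier G \<Longrightarrow>
   mult_list f hs = (if j \<in> set hs then f j else \<one>)"
proof (induction hs)
  case Nil
  then show ?case by simp
next
  case (Cons h hs)
  show ?case
  proof (cases "h = j")
    case True
    then have "mult_list f hs = \<one>" using Cons.prems by (intro mult_list_ones) auto
    then show ?thesis using True Cons.prems by simp
  next
    case False
    then show ?thesis using Cons by auto
  qed
qed

lemma mult_list_lcs_rcos_cong: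
  "(\<And>h. h \<in> set hs \<Longrightarrow> f h \<in> carrier G \<and> g h \<in> carrier G \<and> lcs G k #> f h = lcs G k #> g h) \<Longrightarrow>
   lcs G k #> mult_list f hs = lcs G k #> mult_list g hs"
proof (induction hs)
  case Nil
  then show ?case by simp
next
  case (Cons h hs)
  then have "mult_list f hs \<in> carrier G" "mult_list g hs \<in> carrier G" by auto
  then show ?case using Cons by (simp add: lcs_rcos_mult [symmetric])
qed

end

context exp2_metabelian_group
begin

lemma mult_list_derived: "(\<And>h. h \<in> set hs \<Longrightarrow> f h \<in> G') \<Longrightarrow> mult_list f hs \<in> G'"
  by (induction hs) auto

lemma mult_list_mult_distrib: "(\<And>h. h \<in> set hs \<Longrightarrow> f h \<in> G' \<and> g h \<in> G') \<Longrightarrow>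
   mult_list (\<lambda>h. f h \<otimes> g h) hs = mult_list f hs \<otimes> mult_list g hs"
proof (induction hs)
  case Nil
  then show ?case by simp
next
  case (Cons h hs)
  have "mult_list f hs \<in> G'" "mult_list g hs \<in> G'" using Cons.prems by (auto intro!: mult_list_derived)
  then show ?case using Cons by (simp add: m_assoc derived_ac)
qed

abbreviation L :: "(nat \<Rightarrow> 'a set) ring" where
  "L \<equiv> LG G"

text \<open>Degree \<open>k\<close> of \<open>L\<close> is stored as a coset of \<open>lcs G k\<close> (the paper's \<open>G^(k+1)\<close>), so its
  representatives lie in \<open>lcs G (k - 1)\<close>; degree \<open>0\<close> holds the dummy coset \<open>carrier G\<close>.\<close>
definition repr_seq :: "(nat \<Rightarrow> 'a) \<Rightarrow> bool" where
  "repr_seq r \<longleftrightarrow> (\<forall>k. r k \<in> lcs G (k - 1)) \<and> (\<exists>B. \<forall>k>B. r k = \<one>)"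

definition LG_of :: "(nat \<Rightarrow> 'a) \<Rightarrow> nat \<Rightarrow> 'a set" where
  "LG_of r = (\<lambda>k. lcs G k #> r k)"

definition bracket_seq :: "(nat \<Rightarrow> 'a) \<Rightarrow> (nat \<Rightarrow> 'a) \<Rightarrow> nat \<Rightarrow> 'a" where
  "bracket_seq r s m = mult_list (\<lambda>h. comm (r h) (s (m - h))) [1..<m]"

lemma LG_simps:
  "carrier L = LG_carrier G" "ring.add L = LG_add G" "monoid.mult L = LG_bracket G" "ring.zero L = LG_zero G"
  by (simp_all add: LG_def)

lemma Gamma_Suc [simp]: "Gamma G (Suc m) = lcs G m"
  by (simp add: Gamma_def)

lemma repr_seq_in_lcs: "repr_seq r \<Longrightarrow> r k \<in> lcs G (k - 1)"
  by (simp add: repr_seq_def)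

lemma repr_seq_closed [simp]: "repr_seq r \<Longrightarrow> r k \<in> carrier G"
  using repr_seq_in_lcs lcs_in_carrier by blast

lemma repr_seq_eventually_one: "repr_seq r \<Longrightarrow> \<exists>B. \<forall>k>B. r k = \<one>"
  by (simp add: repr_seq_def)

lemma repr_seq_one [simp]: "repr_seq (\<lambda>_. \<one>)"
  by (simp add: repr_seq_def)

lemma repr_seq_mult: assumes "repr_seq r" "repr_seq s" shows "repr_seq (\<lambda>k. r k \<otimes> s k)"
proof -
  obtain B1 B2 where "\<forall>k>B1. r k = \<one>" "\<forall>k>B2. s k = \<one>"
    using assms repr_seq_eventually_one by metis
  then have "\<forall>k>max B1 B2. r k \<otimes> s k = \<one>" by simp
  moreover have "r k \<otimes> s k \<in> lcs G (k - 1)" for k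
    using assms repr_seq_in_lcs by simp
  ultimately show ?thesis unfolding repr_seq_def by blast
qed

lemma LG_of_closed: assumes "repr_seq r" shows "LG_of r \<in> carrier L"
proof -
  obtain B where B: "\<forall>k>B. r k = \<one>" using assms repr_seq_eventually_one by blast
  have "{m. LG_of r m \<noteq> Gamma G (m + 1)} \<subseteq> {..B}"
    using B by (auto simp: LG_of_def not_le [symmetric])
  then have "finite {m. LG_of r m \<noteq> Gamma G (m + 1)}" using finite_subset by blast
  moreover have "LG_of r 0 = carrier G"
    using lcs_rcos_const [of "r 0" 0] repr_seq_in_lcs [OF assms, of 0] by (simp add: LG_of_def)
  ultimately show ?thesis
    using repr_seq_in_lcs [OF assms] by (auto simp: LG_simps LG_carrier_def LG_of_def Gamma_def)
qed

lemma LG_of_surj: assumes f: "f \<in> carrier L" shows "\<exists>r. repr_seq r \<and> f = LG_of r"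
proof -
  have f0: "f 0 = carrier G" and fin: "finite {m. f m \<noteq> lcs G m}"
    and fm: "\<And>m. m \<ge> 1 \<Longrightarrow> \<exists>a. a \<in> lcs G (m - 1) \<and> f m = lcs G m #> a"
    using f by (auto simp: LG_simps LG_carrier_def Gamma_def)
  define r where "r k = (if k \<ge> 1 \<and> f k \<noteq> lcs G k
    then (SOME a. a \<in> lcs G (k - 1) \<and> f k = lcs G k #> a) else \<one>)" for k
  have r: "r k \<in> lcs G (k - 1) \<and> f k = lcs G k #> r k" if "k \<ge> 1" for k
    using that someI_ex [OF fm [OF that]] by (cases "f k = lcs G k") (simp_all add: r_def)
  obtain B where B: "\<forall>k \<in> {m. f m \<noteq> lcs G m}. k < B" using fin finite_nat_set_iff_bounded by blast
  have "r k \<in> lcs G (k - 1)" for k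
    using r [of k] by (cases "k \<ge> 1") (simp_all add: r_def)
  moreover have "\<forall>k>B. r k = \<one>" using B by (auto simp: r_def)
  ultimately have "repr_seq r" unfolding repr_seq_def by blast
  moreover have "f = LG_of r"
  proof
    fix k
    show "f k = LG_of r k"
    proof (cases "k \<ge> 1")
      case True
      then show ?thesis using r by (simp add: LG_of_def)
    next
      case False
      then have "k = 0" by simp
      then show ?thesis using f0 by (simp add: LG_of_def r_def)
    qed
  qed
  ultimately show ?thesis by blast
qed

lemma LG_carrierE: assumes "x \<in> carrier L" obtains r where "repr_seq r" "x = LG_of r"
  using LG_of_surj [OF assms] by blast

lemma LG_zero_eq: "\<zero>\<^bsub>L\<^esub> = LG_of (\<lambda>_. \<one>)"
  by (simp add: LG_simps LG_zero_def LG_of_def Gamma_def)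

lemma LG_add_LG_of: "repr_seq r \<Longrightarrow> repr_seq s \<Longrightarrow> LG_of r \<oplus>\<^bsub>L\<^esub> LG_of s = LG_of (\<lambda>k. r k \<otimes> s k)"
  by (simp add: LG_simps LG_add_def LG_of_def lcs_rcos_mult)

lemma LG_of_cong: "(\<And>k. lcs G k #> r k = lcs G k #> s k) \<Longrightarrow> LG_of r = LG_of s"
  by (simp add: LG_of_def)

text \<open>Entries in degree \<open>0\<close> never matter.\<close>
lemma LG_of_eqI: assumes "repr_seq r" "repr_seq s" "\<And>k. k \<ge> 1 \<Longrightarrow> lcs G k #> r k = lcs G k #> s k"
  shows "LG_of r = LG_of s"
proof (rule LG_of_cong)
  fix k
  show "lcs G k #> r k = lcs G k #> s k"
  proof (cases "k \<ge> 1")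
    case True
    then show ?thesis using assms(3) by simp
  next
    case False
    then have "k = 0" by simp
    then show ?thesis using assms(1,2) lcs_rcos_const [of "r 0" 0] lcs_rcos_const [of "s 0" 0] by simp
  qed
qed

lemma LG_bracket_LG_of: assumes r: "repr_seq r" and s: "repr_seq s"
  shows "LG_of r \<otimes>\<^bsub>L\<^esub> LG_of s = LG_of (bracket_seq r s)"
proof
  fix m
  have "set hs \<subseteq> {1..<m} \<Longrightarrow>
    foldr (\<lambda>h acc. coset_comm G h (m - h) (LG_of r h) (LG_of s (m - h)) <#> acc) hs (lcs G m)
      = lcs G m #> mult_list (\<lambda>h. comm (r h) (s (m - h))) hs" for hs
  proof (induction hs)
    case Nil
    then show ?case by simp
  next
    case (Cons h hs)
    then have h: "1 \<le> h" "1 \<le> m - h" "h + (m - h) = m" by auto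
    then have "coset_comm G h (m - h) (LG_of r h) (LG_of s (m - h)) = lcs G m #> comm (r h) (s (m - h))"
      using coset_comm_lcs_rcos [OF h(1,2) repr_seq_in_lcs [OF r] repr_seq_in_lcs [OF s]]
      by (simp add: LG_of_def)
    then show ?case using Cons r s by (simp add: lcs_rcos_mult)
  qed
  from this [of "[1..<m]"]
  show "(LG_of r \<otimes>\<^bsub>L\<^esub> LG_of s) m = LG_of (bracket_seq r s) m"
    by (simp add: LG_simps LG_bracket_def bracket_seq_def LG_of_def [of "bracket_seq r s"])
qed

lemma repr_seq_bracket: assumes r: "repr_seq r" and s: "repr_seq s" shows "repr_seq (bracket_seq r s)"
proof -
  obtain B1 B2 where B: "\<forall>k>B1. r k = \<one>" "\<forall>k>B2. s k = \<one>"
    using r s repr_seq_eventually_one by metis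
  have "comm (r h) (s (m - h)) \<in> lcs G (m - 1)" if "h \<in> set [1..<m]" for h m
  proof -
    have "comm (r h) (s (m - h)) \<in> lcs G (h - 1 + (m - h - 1) + 1)"
      by (rule commutator_in_lcs_add [OF repr_seq_in_lcs [OF r] repr_seq_in_lcs [OF s]])
    moreover have "h - 1 + (m - h - 1) + 1 = m - 1" using that by auto
    ultimately show ?thesis by (simp only:)
  qed
  moreover have "comm (r h) (s (m - h)) = \<one>" if "B1 + B2 < m" for h m
    using B r s that by (cases "h > B1") auto
  ultimately show ?thesis
    unfolding repr_seq_def bracket_seq_def
    by (auto intro!: mult_list_in_lcs mult_list_ones exI [of _ "B1 + B2"])
qed

lemma lcs_rcos_mult_self: "1 \<le> k \<Longrightarrow> a \<in> lcs G (k - 1) \<Longrightarrow> lcs G k #> (a \<otimes> a) = lcs G k"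
  by (rule lcs_rcos_const [OF square_in_lcs])

lemma LG_add_self: assumes "x \<in> carrier L" shows "x \<oplus>\<^bsub>L\<^esub> x = \<zero>\<^bsub>L\<^esub>"
proof (rule LG_carrierE [OF assms])
  fix r assume r: "repr_seq r" "x = LG_of r"
  have "LG_of (\<lambda>k. r k \<otimes> r k) = LG_of (\<lambda>_. \<one>)"
    by (rule LG_of_eqI) (use r repr_seq_mult repr_seq_in_lcs lcs_rcos_mult_self in auto)
  then show ?thesis using r by (simp add: LG_add_LG_of LG_zero_eq)
qed

lemma LG_abelian_group: "abelian_group L"
proof (rule abelian_groupI)
  fix x y assume "x \<in> carrier L" "y \<in> carrier L"
  then show "x \<oplus>\<^bsub>L\<^esub> y \<in> carrier L"
    by (elim LG_carrierE) (simp add: LG_add_LG_of repr_seq_mult LG_of_closed)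
next
  show "\<zero>\<^bsub>L\<^esub> \<in> carrier L" by (simp add: LG_zero_eq LG_of_closed)
next
  fix x y z assume "x \<in> carrier L" "y \<in> carrier L" "z \<in> carrier L"
  then show "x \<oplus>\<^bsub>L\<^esub> y \<oplus>\<^bsub>L\<^esub> z = x \<oplus>\<^bsub>L\<^esub> (y \<oplus>\<^bsub>L\<^esub> z)"
    by (elim LG_carrierE) (simp add: LG_add_LG_of repr_seq_mult m_assoc)
next
  fix x y assume "x \<in> carrier L" "y \<in> carrier L"
  then show "x \<oplus>\<^bsub>L\<^esub> y = y \<oplus>\<^bsub>L\<^esub> x"
  proof (elim LG_carrierE)
    fix r s assume rs: "repr_seq r" "repr_seq s" "x = LG_of r" "y = LG_of s"
    have "LG_of (\<lambda>k. r k \<otimes> s k) = LG_of (\<lambda>k. s k \<otimes> r k)"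
      by (rule LG_of_eqI) (use rs lcs_rcos_mult_commute repr_seq_in_lcs repr_seq_mult in auto)
    then show ?thesis using rs by (simp add: LG_add_LG_of)
  qed
next
  fix x assume "x \<in> carrier L"
  then show "\<zero>\<^bsub>L\<^esub> \<oplus>\<^bsub>L\<^esub> x = x"
    by (elim LG_carrierE) (simp add: LG_zero_eq LG_add_LG_of)
next
  fix x assume "x \<in> carrier L"
  then show "\<exists>y\<in>carrier L. y \<oplus>\<^bsub>L\<^esub> x = \<zero>\<^bsub>L\<^esub>" using LG_add_self by blast
qed

end

sublocale exp2_metabelian_group \<subseteq> L: abelian_group "LG G"
  by (rule LG_abelian_group)

context exp2_metabelian_group
begin

lemma LG_bracket_closed: "x \<in> carrier L \<Longrightarrow> y \<in> carrier L \<Longrightarrow> x \<otimes>\<^bsub>L\<^esub> y \<in> carrier L"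
  by (elim LG_carrierE) (simp add: LG_bracket_LG_of repr_seq_bracket LG_of_closed)

lemma lcs_rcos_bracket_seq_mult_left:
  assumes r: "repr_seq r" and r': "repr_seq r'" and s: "repr_seq s"
  shows "lcs G m #> bracket_seq (\<lambda>k. r k \<otimes> r' k) s m = lcs G m #> (bracket_seq r s m \<otimes> bracket_seq r' s m)"
proof -
  have "lcs G m #> bracket_seq (\<lambda>k. r k \<otimes> r' k) s m =
        lcs G m #> mult_list (\<lambda>h. comm (r h) (s (m - h)) \<otimes> comm (r' h) (s (m - h))) [1..<m]"
    unfolding bracket_seq_def
  proof (rule mult_list_lcs_rcos_cong)
    fix h assume "h \<in> set [1..<m]"
    then have e: "h - 1 + (m - h - 1) + 2 = m" by auto
    have "lcs G (h - 1 + (m - h - 1) + 2) #> comm (r h \<otimes> r' h) (s (m - h)) =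
          lcs G (h - 1 + (m - h - 1) + 2) #> (comm (r h) (s (m - h)) \<otimes> comm (r' h) (s (m - h)))"
      by (rule lcs_rcos_commutator_mult_left [OF repr_seq_in_lcs [OF r] repr_seq_in_lcs [OF r']
          repr_seq_in_lcs [OF s]])
    then show "comm (r h \<otimes> r' h) (s (m - h)) \<in> carrier G \<and>
          comm (r h) (s (m - h)) \<otimes> comm (r' h) (s (m - h)) \<in> carrier G \<and>
          lcs G m #> comm (r h \<otimes> r' h) (s (m - h)) =
          lcs G m #> (comm (r h) (s (m - h)) \<otimes> comm (r' h) (s (m - h)))"
      using r r' s by (simp only: e) simp
  qed
  also have "\<dots> = lcs G m #> (bracket_seq r s m \<otimes> bracket_seq r' s m)"
    unfolding bracket_seq_def using r r' s by (subst mult_list_mult_distrib) auto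
  finally show ?thesis .
qed

lemma lcs_rcos_bracket_seq_mult_right:
  assumes r: "repr_seq r" and s: "repr_seq s" and s': "repr_seq s'"
  shows "lcs G m #> bracket_seq r (\<lambda>k. s k \<otimes> s' k) m = lcs G m #> (bracket_seq r s m \<otimes> bracket_seq r s' m)"
proof -
  have "lcs G m #> bracket_seq r (\<lambda>k. s k \<otimes> s' k) m =
        lcs G m #> mult_list (\<lambda>h. comm (r h) (s (m - h)) \<otimes> comm (r h) (s' (m - h))) [1..<m]"
    unfolding bracket_seq_def
  proof (rule mult_list_lcs_rcos_cong)
    fix h assume "h \<in> set [1..<m]"
    then have e: "h - 1 + (m - h - 1) + 2 = m" by auto
    have "lcs G (h - 1 + (m - h - 1) + 2) #> comm (r h) (s (m - h) \<otimes> s' (m - h)) =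
          lcs G (h - 1 + (m - h - 1) + 2) #> (comm (r h) (s (m - h)) \<otimes> comm (r h) (s' (m - h)))"
      by (rule lcs_rcos_commutator_mult_right [OF repr_seq_in_lcs [OF r] repr_seq_in_lcs [OF s]
          repr_seq_in_lcs [OF s']])
    then show "comm (r h) (s (m - h) \<otimes> s' (m - h)) \<in> carrier G \<and>
          comm (r h) (s (m - h)) \<otimes> comm (r h) (s' (m - h)) \<in> carrier G \<and>
          lcs G m #> comm (r h) (s (m - h) \<otimes> s' (m - h)) =
          lcs G m #> (comm (r h) (s (m - h)) \<otimes> comm (r h) (s' (m - h)))"
      using r s s' by (simp only: e) simp
  qed
  also have "\<dots> = lcs G m #> (bracket_seq r s m \<otimes> bracket_seq r s' m)"
    unfolding bracket_seq_def using r s s' by (subst mult_list_mult_distrib) auto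
  finally show ?thesis .
qed

lemma LG_bracket_add_left: assumes "x \<in> carrier L" "y \<in> carrier L" "z \<in> carrier L"
  shows "(x \<oplus>\<^bsub>L\<^esub> y) \<otimes>\<^bsub>L\<^esub> z = x \<otimes>\<^bsub>L\<^esub> z \<oplus>\<^bsub>L\<^esub> y \<otimes>\<^bsub>L\<^esub> z"
  using assms
proof (elim LG_carrierE)
  fix r r' s assume a: "repr_seq r" "x = LG_of r" "repr_seq r'" "y = LG_of r'" "repr_seq s" "z = LG_of s"
  have "LG_of (bracket_seq (\<lambda>k. r k \<otimes> r' k) s) = LG_of (\<lambda>m. bracket_seq r s m \<otimes> bracket_seq r' s m)"
    by (rule LG_of_eqI)
      (use a in \<open>simp_all add: repr_seq_bracket repr_seq_mult lcs_rcos_bracket_seq_mult_left\<close>)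
  then show ?thesis using a by (simp add: LG_add_LG_of LG_bracket_LG_of repr_seq_mult repr_seq_bracket)
qed

lemma LG_bracket_add_right: assumes "x \<in> carrier L" "y \<in> carrier L" "z \<in> carrier L"
  shows "z \<otimes>\<^bsub>L\<^esub> (x \<oplus>\<^bsub>L\<^esub> y) = z \<otimes>\<^bsub>L\<^esub> x \<oplus>\<^bsub>L\<^esub> z \<otimes>\<^bsub>L\<^esub> y"
  using assms
proof (elim LG_carrierE)
  fix r r' s assume a: "repr_seq r" "x = LG_of r" "repr_seq r'" "y = LG_of r'" "repr_seq s" "z = LG_of s"
  have "LG_of (bracket_seq s (\<lambda>k. r k \<otimes> r' k)) = LG_of (\<lambda>m. bracket_seq s r m \<otimes> bracket_seq s r' m)"
    by (rule LG_of_eqI)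
      (use a in \<open>simp_all add: repr_seq_bracket repr_seq_mult lcs_rcos_bracket_seq_mult_right\<close>)
  then show ?thesis using a by (simp add: LG_add_LG_of LG_bracket_LG_of repr_seq_mult repr_seq_bracket)
qed

lemma LG_bracket_zero_left [simp]: "x \<in> carrier L \<Longrightarrow> \<zero>\<^bsub>L\<^esub> \<otimes>\<^bsub>L\<^esub> x = \<zero>\<^bsub>L\<^esub>"
proof (elim LG_carrierE)
  fix r assume r: "repr_seq r" "x = LG_of r"
  have "bracket_seq (\<lambda>_. \<one>) r = (\<lambda>_. \<one>)"
    using r by (auto simp: bracket_seq_def intro!: mult_list_ones)
  then show ?thesis using r by (simp add: LG_zero_eq LG_bracket_LG_of)
qed

lemma LG_bracket_zero_right [simp]: "x \<in> carrier L \<Longrightarrow> x \<otimes>\<^bsub>L\<^esub> \<zero>\<^bsub>L\<^esub> = \<zero>\<^bsub>L\<^esub>"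
proof (elim LG_carrierE)
  fix r assume r: "repr_seq r" "x = LG_of r"
  have "bracket_seq r (\<lambda>_. \<one>) = (\<lambda>_. \<one>)"
    using r by (auto simp: bracket_seq_def intro!: mult_list_ones)
  then show ?thesis using r by (simp add: LG_zero_eq LG_bracket_LG_of)
qed

definition homog :: "nat \<Rightarrow> 'a \<Rightarrow> nat \<Rightarrow> 'a set" where
  "homog m a = LG_of ((\<lambda>_. \<one>)(m := a))"

lemma repr_seq_single: "a \<in> lcs G (m - 1) \<Longrightarrow> repr_seq ((\<lambda>_. \<one>)(m := a))"
  unfolding repr_seq_def by (auto intro: exI [of _ m])

lemma homog_closed: "a \<in> lcs G (m - 1) \<Longrightarrow> homog m a \<in> carrier L"
  by (simp add: homog_def LG_of_closed repr_seq_single)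

lemma LG_bracket_homog:
  assumes "1 \<le> h" "1 \<le> k" "a \<in> lcs G (h - 1)" "b \<in> lcs G (k - 1)"
  shows "homog h a \<otimes>\<^bsub>L\<^esub> homog k b = homog (h + k) (comm a b)"
proof -
  have "bracket_seq ((\<lambda>_. \<one>)(h := a)) ((\<lambda>_. \<one>)(k := b)) = (\<lambda>_. \<one>)(h + k := comm a b)"
  proof
    fix m
    have "bracket_seq ((\<lambda>_. \<one>)(h := a)) ((\<lambda>_. \<one>)(k := b)) m
        = (if h \<in> set [1..<m] then comm a (((\<lambda>_. \<one>)(k := b)) (m - h)) else \<one>)"
      unfolding bracket_seq_def using assms by (subst mult_list_single [where j = h]) auto
    then show "bracket_seq ((\<lambda>_. \<one>)(h := a)) ((\<lambda>_. \<one>)(k := b)) m = ((\<lambda>_. \<one>)(h + k := comm a b)) m"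
      using assms by auto
  qed
  then show ?thesis using assms by (simp add: homog_def LG_bracket_LG_of repr_seq_single)
qed

lemma homog_add: assumes "a \<in> lcs G (m - 1)" "b \<in> lcs G (m - 1)"
  shows "homog m a \<oplus>\<^bsub>L\<^esub> homog m b = homog m (a \<otimes> b)"
proof -
  have "(\<lambda>k. ((\<lambda>_. \<one>)(m := a)) k \<otimes> ((\<lambda>_. \<one>)(m := b)) k) = (\<lambda>_. \<one>)(m := a \<otimes> b)"
    using assms by auto
  then show ?thesis using assms by (simp add: homog_def LG_add_LG_of repr_seq_single)
qed

lemma homog_one [simp]: "homog m \<one> = \<zero>\<^bsub>L\<^esub>"
  by (simp add: homog_def LG_zero_eq fun_upd_def)

lemma homog_eq_zero: "a \<in> lcs G m \<Longrightarrow> homog m a = \<zero>\<^bsub>L\<^esub>"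
  unfolding homog_def LG_zero_eq by (rule LG_of_cong) (simp add: lcs_rcos_const)

lemma homog_cong: "lcs G m #> a = lcs G m #> b \<Longrightarrow> homog m a = homog m b"
  unfolding homog_def by (rule LG_of_cong) simp

text \<open>Induction over the truncations of a representative sequence: every element is a finite sum
  of homogeneous ones.\<close>
lemma LG_of_induct:
  assumes r: "repr_seq r" and zero: "P \<zero>\<^bsub>L\<^esub>"
    and add: "\<And>x m. x \<in> carrier L \<Longrightarrow> P x \<Longrightarrow> 1 \<le> m \<Longrightarrow> P (x \<oplus>\<^bsub>L\<^esub> homog m (r m))"
  shows "P (LG_of r)"
proof -
  define trunc where "trunc B = (\<lambda>k. if k \<le> B then r k else \<one>)" for B
  have repr_trunc: "repr_seq (trunc B)" for B
  proof -
    have "trunc B k \<in> lcs G (k - 1)" for k using repr_seq_in_lcs [OF r] by (simp add: trunc_def)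
    moreover have "\<forall>k>B. trunc B k = \<one>" by (simp add: trunc_def)
    ultimately show ?thesis unfolding repr_seq_def by blast
  qed
  have "P (LG_of (trunc B))" for B
  proof (induction B)
    case 0
    have "LG_of (trunc 0) = \<zero>\<^bsub>L\<^esub>"
      unfolding LG_zero_eq by (rule LG_of_eqI [OF repr_trunc repr_seq_one]) (simp add: trunc_def)
    then show ?case using zero by simp
  next
    case (Suc B)
    have "(\<lambda>k. trunc B k \<otimes> ((\<lambda>_. \<one>)(Suc B := r (Suc B))) k) = trunc (Suc B)"
      using r by (auto simp: trunc_def)
    then have "LG_of (trunc (Suc B)) = LG_of (trunc B) \<oplus>\<^bsub>L\<^esub> homog (Suc B) (r (Suc B))"
      using repr_trunc repr_seq_single [OF repr_seq_in_lcs [OF r]]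
      by (simp add: homog_def LG_add_LG_of)
    then show ?case using add [OF LG_of_closed [OF repr_trunc] Suc.IH] by simp
  qed
  moreover obtain B where "\<forall>k>B. r k = \<one>" using r repr_seq_eventually_one by blast
  then have "trunc B = r" by (auto simp: trunc_def)
  ultimately show ?thesis by metis
qed

lemma LG_induct [consumes 1, case_names zero add_homog]:
  assumes "x \<in> carrier L" and "P \<zero>\<^bsub>L\<^esub>"
    and "\<And>x m a. x \<in> carrier L \<Longrightarrow> P x \<Longrightarrow> 1 \<le> m \<Longrightarrow> a \<in> lcs G (m - 1) \<Longrightarrow> P (x \<oplus>\<^bsub>L\<^esub> homog m a)"
  shows "P x"
proof -
  obtain r where r: "repr_seq r" "x = LG_of r" using LG_carrierE [OF assms(1)] by blast
  show ?thesis
    unfolding r(2) by (rule LG_of_induct [where P = P, OF r(1) assms(2)]) (use assms(3) repr_seq_in_lcs r in blast)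
qed

lemma LG_bracket_commute_homog:
  assumes x: "x \<in> carrier L" and k: "1 \<le> k" "b \<in> lcs G (k - 1)"
  shows "x \<otimes>\<^bsub>L\<^esub> homog k b = homog k b \<otimes>\<^bsub>L\<^esub> x"
  using x
proof (induction rule: LG_induct)
  case zero
  then show ?case using homog_closed [OF k(2)] by simp
next
  case (add_homog x m a)
  have "homog m a \<otimes>\<^bsub>L\<^esub> homog k b = homog k b \<otimes>\<^bsub>L\<^esub> homog m a"
    using add_homog k by (simp add: LG_bracket_homog commutator_commute [of a b] add.commute)
  then show ?case
    using add_homog k homog_closed
    by (simp add: LG_bracket_add_left LG_bracket_add_right)
qed

lemma LG_bracket_commute: assumes "x \<in> carrier L" "y \<in> carrier L"
  shows "x \<otimes>\<^bsub>L\<^esub> y = y \<otimes>\<^bsub>L\<^esub> x"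
  using assms(2)
proof (induction rule: LG_induct)
  case zero
  then show ?case using assms(1) by simp
next
  case (add_homog y m a)
  then show ?case
    using assms(1) homog_closed LG_bracket_commute_homog
    by (simp add: LG_bracket_add_left LG_bracket_add_right)
qed

lemma LG_bracket_self: assumes "x \<in> carrier L" shows "x \<otimes>\<^bsub>L\<^esub> x = \<zero>\<^bsub>L\<^esub>"
  using assms
proof (induction rule: LG_induct)
  case zero
  then show ?case by simp
next
  case (add_homog x m a)
  let ?h = "homog m a"
  have h: "?h \<in> carrier L" using add_homog homog_closed by blast
  have hh: "?h \<otimes>\<^bsub>L\<^esub> ?h = \<zero>\<^bsub>L\<^esub>" using add_homog by (simp add: LG_bracket_homog)
  have "(x \<oplus>\<^bsub>L\<^esub> ?h) \<otimes>\<^bsub>L\<^esub> (x \<oplus>\<^bsub>L\<^esub> ?h)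
      = x \<otimes>\<^bsub>L\<^esub> x \<oplus>\<^bsub>L\<^esub> (x \<otimes>\<^bsub>L\<^esub> ?h \<oplus>\<^bsub>L\<^esub> x \<otimes>\<^bsub>L\<^esub> ?h) \<oplus>\<^bsub>L\<^esub> ?h \<otimes>\<^bsub>L\<^esub> ?h"
    using add_homog h
    by (simp add: LG_bracket_add_left LG_bracket_add_right LG_bracket_closed
        LG_bracket_commute [of ?h x] L.a_ac)
  then show ?case using add_homog h hh by (simp add: LG_add_self LG_bracket_closed)
qed

definition jacobiator :: "(nat \<Rightarrow> 'a set) \<Rightarrow> (nat \<Rightarrow> 'a set) \<Rightarrow> (nat \<Rightarrow> 'a set) \<Rightarrow> nat \<Rightarrow> 'a set" where
  "jacobiator x y z =
     x \<otimes>\<^bsub>L\<^esub> (y \<otimes>\<^bsub>L\<^esub> z) \<oplus>\<^bsub>L\<^esub> y \<otimes>\<^bsub>L\<^esub> (z \<otimes>\<^bsub>L\<^esub> x) \<oplus>\<^bsub>L\<^esub> z \<otimes>\<^bsub>L\<^esub> (x \<otimes>\<^bsub>L\<^esub> y)"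

lemma jacobiator_rotate:
  "x \<in> carrier L \<Longrightarrow> y \<in> carrier L \<Longrightarrow> z \<in> carrier L \<Longrightarrow> jacobiator x y z = jacobiator y z x"
  unfolding jacobiator_def by (simp add: LG_bracket_closed L.a_ac)

lemma jacobiator_add_left:
  assumes "x \<in> carrier L" "x' \<in> carrier L" "y \<in> carrier L" "z \<in> carrier L"
  shows "jacobiator (x \<oplus>\<^bsub>L\<^esub> x') y z = jacobiator x y z \<oplus>\<^bsub>L\<^esub> jacobiator x' y z"
  unfolding jacobiator_def using assms
  by (simp add: LG_bracket_add_left LG_bracket_add_right LG_bracket_closed L.a_ac)

lemma LG_bracket_homog_nested:
  assumes "1 \<le> h" "1 \<le> k" "1 \<le> l" "a \<in> lcs G (h - 1)" "b \<in> lcs G (k - 1)" "d \<in> lcs G (l - 1)"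
  shows "homog h a \<otimes>\<^bsub>L\<^esub> (homog k b \<otimes>\<^bsub>L\<^esub> homog l d) = homog (h + k + l) (comm a (comm b d))"
    and "comm a (comm b d) \<in> lcs G (h + k + l - 1)"
proof -
  have "k - 1 + (l - 1) + 1 = k + l - 1" "h - 1 + (k + l - 1) + 1 = h + k + l - 1"
    using assms(1-3) by simp_all
  note degrees = this
  have bd: "comm b d \<in> lcs G (k + l - 1)"
    using commutator_in_lcs_add [OF assms(5,6)] unfolding degrees .
  then show "homog h a \<otimes>\<^bsub>L\<^esub> (homog k b \<otimes>\<^bsub>L\<^esub> homog l d) = homog (h + k + l) (comm a (comm b d))"
    using assms by (simp add: LG_bracket_homog add.assoc)
  show "comm a (comm b d) \<in> lcs G (h + k + l - 1)"
    using commutator_in_lcs_add [OF assms(4) bd] unfolding degrees .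
qed

lemma jacobiator_homog:
  assumes "1 \<le> h" "1 \<le> k" "1 \<le> l" "a \<in> lcs G (h - 1)" "b \<in> lcs G (k - 1)" "d \<in> lcs G (l - 1)"
  shows "jacobiator (homog h a) (homog k b) (homog l d) = \<zero>\<^bsub>L\<^esub>"
proof -
  note nested = LG_bracket_homog_nested [OF assms]
    LG_bracket_homog_nested [of k l h b d a] LG_bracket_homog_nested [of l h k d a b]
  have "jacobiator (homog h a) (homog k b) (homog l d) =
    homog (h + k + l) (comm a (comm b d) \<otimes> comm b (comm d a) \<otimes> comm d (comm a b))"
    using nested assms by (simp add: jacobiator_def homog_add ac_simps)
  then show ?thesis using assms by (simp add: jacobi_commutator)
qed

lemma jacobiator_reduce:
  assumes "x \<in> carrier L" "y \<in> carrier L" "z \<in> carrier L"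
    and homog: "\<And>m a. 1 \<le> m \<Longrightarrow> a \<in> lcs G (m - 1) \<Longrightarrow> jacobiator (homog m a) y z = \<zero>\<^bsub>L\<^esub>"
  shows "jacobiator x y z = \<zero>\<^bsub>L\<^esub>"
  using assms(1)
proof (induction rule: LG_induct)
  case zero
  then show ?case using assms(2,3) by (simp add: jacobiator_def LG_bracket_closed)
next
  case (add_homog x m a)
  then show ?case using assms(2,3) homog homog_closed by (simp add: jacobiator_add_left)
qed

lemma jacobiator_eq_zero:
  assumes "x \<in> carrier L" "y \<in> carrier L" "z \<in> carrier L"
  shows "jacobiator x y z = \<zero>\<^bsub>L\<^esub>"
proof (rule jacobiator_reduce [OF assms])
  fix h a assume a: "1 \<le> h" "a \<in> lcs G (h - 1)"
  have "jacobiator y z (homog h a) = \<zero>\<^bsub>L\<^esub>"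
  proof (rule jacobiator_reduce [OF assms(2,3) homog_closed [OF a(2)]])
    fix k b assume b: "1 \<le> k" "b \<in> lcs G (k - 1)"
    have "jacobiator z (homog h a) (homog k b) = \<zero>\<^bsub>L\<^esub>"
      by (rule jacobiator_reduce [OF assms(3) homog_closed [OF a(2)] homog_closed [OF b(2)]])
        (use jacobiator_homog a b in blast)
    then show "jacobiator (homog k b) z (homog h a) = \<zero>\<^bsub>L\<^esub>"
      using jacobiator_rotate assms homog_closed a b by metis
  qed
  then show "jacobiator (homog h a) y z = \<zero>\<^bsub>L\<^esub>"
    using jacobiator_rotate assms homog_closed a by metis
qed

end

lemma (in abelian_group) add_subgroupI_char2:
  assumes char2: "\<And>x. x \<in> carrier G \<Longrightarrow> x \<oplus> x = \<zero>"
    and "H \<subseteq> carrier G" "H \<noteq> {}" "\<And>a b. a \<in> H \<Longrightarrow> b \<in> H \<Longrightarrow> a \<oplus> b \<in> H"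
  shows "subgroup H (add_monoid G)"
proof -
  have "\<ominus> a = a" if "a \<in> H" for a
    using that assms(2) char2 minus_equality by blast
  then show ?thesis
    by (intro add.subgroupI) (use assms in \<open>auto simp: a_inv_def\<close>)
qed

context exp2_metabelian_group
begin

lemma LG_comp_iff: "x \<in> LG_comp G m \<longleftrightarrow> x \<in> carrier L \<and> (\<forall>k. k \<noteq> m \<longrightarrow> x k = lcs G k)"
  by (simp add: LG_comp_def LG_simps)

lemma LG_zero_apply: "\<zero>\<^bsub>L\<^esub> = (\<lambda>k. lcs G k)"
  by (simp add: LG_zero_eq LG_of_def)

lemma homog_in_LG_comp: "a \<in> lcs G (m - 1) \<Longrightarrow> homog m a \<in> LG_comp G m"
  by (simp add: LG_comp_iff homog_closed) (simp add: homog_def LG_of_def)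

lemma LG_compE:
  assumes "x \<in> LG_comp G m" obtains a where "a \<in> lcs G (m - 1)" "x = homog m a"
proof -
  have x: "x \<in> carrier L" "\<And>k. k \<noteq> m \<Longrightarrow> x k = lcs G k" using assms LG_comp_iff by auto
  obtain r where r: "repr_seq r" "x = LG_of r" using LG_carrierE [OF x(1)] by blast
  have "x = homog m (r m)"
    unfolding homog_def r(2) by (rule LG_of_cong) (use x r in \<open>auto simp: LG_of_def\<close>)
  then show ?thesis using that repr_seq_in_lcs [OF r(1)] by blast
qed

lemma LG_comp_closed: "x \<in> LG_comp G m \<Longrightarrow> x \<in> carrier L"
  by (simp add: LG_comp_iff)

lemma zero_in_LG_comp: "\<zero>\<^bsub>L\<^esub> \<in> LG_comp G m"
  using homog_in_LG_comp [of \<one> m] by simp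

lemma LG_comp_0: "LG_comp G 0 = {\<zero>\<^bsub>L\<^esub>}"
  using zero_in_LG_comp homog_eq_zero by (auto elim: LG_compE)

lemma subgroup_LG_comp: "subgroup (LG_comp G m) (add_monoid L)"
proof (rule L.add_subgroupI_char2)
  show "LG_comp G m \<subseteq> carrier L" using LG_comp_closed by blast
  show "LG_comp G m \<noteq> {}" using zero_in_LG_comp by blast
  fix x y assume "x \<in> LG_comp G m" "y \<in> LG_comp G m"
  then show "x \<oplus>\<^bsub>L\<^esub> y \<in> LG_comp G m"
    by (elim LG_compE) (simp add: homog_add homog_in_LG_comp)
qed (rule LG_add_self)

lemma LG_bracket_LG_comp:
  assumes "x \<in> LG_comp G h" "y \<in> LG_comp G k" shows "x \<otimes>\<^bsub>L\<^esub> y \<in> LG_comp G (h + k)"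
proof (cases "h = 0 \<or> k = 0")
  case True
  then show ?thesis using assms LG_comp_0 LG_comp_closed zero_in_LG_comp by auto
next
  case False
  obtain a b where ab: "a \<in> lcs G (h - 1)" "x = homog h a" "b \<in> lcs G (k - 1)" "y = homog k b"
    using assms by (auto elim!: LG_compE)
  have "h - 1 + (k - 1) + 1 = h + k - 1" using False by arith
  then have "comm a b \<in> lcs G (h + k - 1)" using commutator_in_lcs_add [OF ab(1,3)] by (simp only:)
  then show ?thesis using ab False LG_bracket_homog [of h k a b] homog_in_LG_comp by simp
qed

lemma LG_rcos_absorb: assumes "f \<in> carrier L"
  shows "lcs G k <#> f k = f k" "f k <#> lcs G k = f k"
proof -
  obtain r where r: "repr_seq r" "f = LG_of r" using LG_carrierE [OF assms] by blast
  show "lcs G k <#> f k = f k" "f k <#> lcs G k = f k"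
    using lcs_rcos_mult [of \<one> "r k" k] lcs_rcos_mult [of "r k" \<one> k] r by (simp_all add: LG_of_def)
qed

lemma finsum_LG_comp_apply: assumes c: "\<And>m. c m \<in> LG_comp G m" and S: "finite S"
  shows "finsum L c S k = (if k \<in> S then c k k else lcs G k)"
  using S
proof (induction S rule: finite_induct)
  case empty
  then show ?case by (simp add: LG_zero_apply)
next
  case (insert a S)
  have ca: "c m \<in> carrier L" for m using c LG_comp_closed by blast
  then have F: "finsum L c S \<in> carrier L" by (simp add: Pi_def)
  have "finsum L c (insert a S) = c a \<oplus>\<^bsub>L\<^esub> finsum L c S"
    using insert ca by (simp add: Pi_def)
  then have e: "finsum L c (insert a S) k = c a k <#> finsum L c S k"
    by (simp add: LG_simps LG_add_def)
  show ?case
  proof (cases "k = a")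
    case True
    then show ?thesis using e insert LG_rcos_absorb(2) [OF ca] by simp
  next
    case False
    then have "c a k = lcs G k" using c LG_comp_iff by blast
    then show ?thesis using e LG_rcos_absorb(1) [OF F, of k] insert.IH False by simp
  qed
qed

definition LG_proj :: "nat \<Rightarrow> (nat \<Rightarrow> 'a set) \<Rightarrow> nat \<Rightarrow> 'a set" where
  "LG_proj m x = (\<lambda>k. if k = m then x k else lcs G k)"

lemma LG_proj_in_LG_comp: assumes "x \<in> carrier L" shows "LG_proj m x \<in> LG_comp G m"
proof -
  obtain r where r: "repr_seq r" "x = LG_of r" using LG_carrierE [OF assms] by blast
  have "LG_proj m x = homog m (r m)"
    by (rule ext) (auto simp: LG_proj_def homog_def LG_of_def r)
  then show ?thesis using homog_in_LG_comp repr_seq_in_lcs [OF r(1)] by simp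
qed

lemma LG_proj_eq_zero_iff: "LG_proj m x = \<zero>\<^bsub>L\<^esub> \<longleftrightarrow> x m = lcs G m"
  by (auto simp: LG_proj_def LG_zero_apply fun_eq_iff)

lemma LG_decomposition_unique:
  assumes c: "\<And>m. c m \<in> LG_comp G m" and S: "finite {m. c m \<noteq> \<zero>\<^bsub>L\<^esub>}"
    and x: "x = finsum L c {m. c m \<noteq> \<zero>\<^bsub>L\<^esub>}"
  shows "c = (\<lambda>m. LG_proj m x)"
proof (intro ext)
  fix m k
  show "c m k = LG_proj m x k"
  proof (cases "k = m")
    case True
    have "x k = (if c k \<noteq> \<zero>\<^bsub>L\<^esub> then c k k else lcs G k)"
      using finsum_LG_comp_apply [OF c S] x by simp
    moreover have "c k = \<zero>\<^bsub>L\<^esub> \<Longrightarrow> c k k = lcs G k" by (simp add: LG_zero_apply)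
    ultimately show ?thesis using True by (auto simp: LG_proj_def)
  next
    case False
    then show ?thesis using c LG_comp_iff by (simp add: LG_proj_def)
  qed
qed

lemma LG_decomposition:
  assumes x: "x \<in> carrier L"
  shows "\<exists>!c. (\<forall>m. c m \<in> LG_comp G m) \<and> finite {m. c m \<noteq> \<zero>\<^bsub>L\<^esub>} \<and>
    x = finsum L c {m. c m \<noteq> \<zero>\<^bsub>L\<^esub>}"
proof
  let ?c = "\<lambda>m. LG_proj m x"
  have c: "?c m \<in> LG_comp G m" for m using LG_proj_in_LG_comp [OF x] .
  have "{m. ?c m \<noteq> \<zero>\<^bsub>L\<^esub>} = {m. x m \<noteq> lcs G m}" by (simp add: LG_proj_eq_zero_iff)
  moreover have fin: "finite {m. x m \<noteq> lcs G m}" using x by (simp add: LG_simps LG_carrier_def Gamma_def)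
  ultimately have fin: "finite {m. ?c m \<noteq> \<zero>\<^bsub>L\<^esub>}" by simp
  have "finsum L ?c {m. ?c m \<noteq> \<zero>\<^bsub>L\<^esub>} = x"
  proof
    fix k
    have "finsum L ?c {m. ?c m \<noteq> \<zero>\<^bsub>L\<^esub>} k = (if k \<in> {m. ?c m \<noteq> \<zero>\<^bsub>L\<^esub>} then ?c k k else lcs G k)"
      by (rule finsum_LG_comp_apply [OF c fin])
    also have "\<dots> = x k" by (simp add: LG_proj_eq_zero_iff) (simp add: LG_proj_def)
    finally show "finsum L ?c {m. ?c m \<noteq> \<zero>\<^bsub>L\<^esub>} k = x k" .
  qed
  then show "(\<forall>m. ?c m \<in> LG_comp G m) \<and> finite {m. ?c m \<noteq> \<zero>\<^bsub>L\<^esub>} \<and> x = finsum L ?c {m. ?c m \<noteq> \<zero>\<^bsub>L\<^esub>}"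
    using c fin by simp
qed (use LG_decomposition_unique in blast)

lemma LG_graded_lie_F2: "graded_lie_F2 L (LG_comp G)"
  unfolding graded_lie_F2_def using subgroup_LG_comp
  by (simp add: LG_abelian_group LG_add_self LG_bracket_closed LG_bracket_add_left LG_bracket_add_right
      LG_bracket_self jacobiator_eq_zero [unfolded jacobiator_def] LG_comp_0 subgroup_LG_comp
      LG_bracket_LG_comp LG_decomposition)

lemma LG_bracket_eq_zero_of_derived:
  assumes "repr_seq r" "repr_seq s" "r 1 \<in> G'" "s 1 \<in> G'"
  shows "LG_of r \<otimes>\<^bsub>L\<^esub> LG_of s = \<zero>\<^bsub>L\<^esub>"
proof -
  have derived: "r h \<in> G'" "s h \<in> G'" if "1 \<le> h" for h
    using assms that lcs_subset_derived [of "h - 1"] repr_seq_in_lcs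
    by (cases "h = 1"; simp)+
  have trivial_comm: "comm (r h) (s (m - h)) = \<one>" if "h \<in> set [1..<m]" for h m
  proof -
    have "1 \<le> h" "1 \<le> m - h" using that by auto
    then show ?thesis using derived by (simp add: commutator_derived_derived)
  qed
  have "bracket_seq r s = (\<lambda>_. \<one>)"
    unfolding bracket_seq_def by (intro ext mult_list_ones trivial_comm)
  then show ?thesis using assms by (simp add: LG_bracket_LG_of LG_zero_eq)
qed

abbreviation bracket_span :: "(nat \<Rightarrow> 'a set) set" where
  "bracket_span \<equiv> generate (add_monoid L) {x \<otimes>\<^bsub>L\<^esub> y | x y. x \<in> carrier L \<and> y \<in> carrier L}"

lemma homog_in_bracket_span:
  assumes m: "2 \<le> m" and a: "a \<in> lcs G (m - 1)" shows "homog m a \<in> bracket_span"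
proof -
  obtain j where j: "m = Suc (Suc j)" using m by (metis add_2_eq_Suc le_Suc_ex)
  have homog_comm: "homog m (comm x y) \<in> bracket_span" if "x \<in> carrier G" "y \<in> lcs G j" for x y
  proof -
    have "homog m (comm x y) = homog 1 x \<otimes>\<^bsub>L\<^esub> homog (Suc j) y"
      using LG_bracket_homog [of 1 "Suc j" x y] that j by simp
    moreover have "homog 1 x \<in> carrier L" "homog (Suc j) y \<in> carrier L"
      using that homog_closed [of x 1] homog_closed [of y "Suc j"] by auto
    ultimately show ?thesis by (blast intro: generate.incl)
  qed
  have "a \<in> generate G {comm x y | x y. x \<in> carrier G \<and> y \<in> lcs G j}" using a j lcs_Suc by simp
  then show ?thesis
  proof (induction a rule: generate.induct)
    case one
    then show ?case using generate.one [of "add_monoid L"] by simp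
  next
    case (incl h)
    then show ?case using homog_comm by blast
  next
    case (inv h)
    then obtain x y where xy: "h = comm x y" "x \<in> carrier G" "y \<in> lcs G j" by blast
    have "inv h \<otimes> inv h \<in> lcs G m"
      using square_in_lcs [of m "inv h"] commutator_in_lcs_Suc [OF xy(2,3)] xy(1) j by simp
    then have "homog m (inv h) = homog m h"
      using xy by (intro homog_cong) (simp add: rcos_eq_iff [OF subgroup_lcs])
    then show ?case using homog_comm xy by simp
  next
    case (eng h1 h2)
    have "h1 \<in> lcs G (m - 1)" "h2 \<in> lcs G (m - 1)" using eng.hyps j lcs_Suc by simp_all
    then have "homog m (h1 \<otimes> h2) = homog m h1 \<oplus>\<^bsub>L\<^esub> homog m h2" by (simp add: homog_add)
    then show ?case using generate.eng [OF eng.IH] by simp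
  qed
qed

definition repr1 :: "(nat \<Rightarrow> 'a set) \<Rightarrow> 'a" where
  "repr1 p = (SOME a. a \<in> carrier G \<and> p = homog 1 a)"

lemma repr1: assumes "p \<in> LG_comp G 1" shows "repr1 p \<in> carrier G" "p = homog 1 (repr1 p)"
proof -
  obtain a where "a \<in> lcs G (1 - 1)" "p = homog 1 a" using assms by (elim LG_compE)
  then have "\<exists>a. a \<in> carrier G \<and> p = homog 1 a" by auto
  then show "repr1 p \<in> carrier G" "p = homog 1 (repr1 p)"
    using someI_ex [of "\<lambda>a. a \<in> carrier G \<and> p = homog 1 a"] by (auto simp: repr1_def)
qed

definition comm_chain :: "(nat \<Rightarrow> 'a set) list \<Rightarrow> 'a \<Rightarrow> 'a" where
  "comm_chain ps v = foldr (\<lambda>p w. comm (repr1 p) w) ps v"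

lemma comm_chain_Nil [simp]: "comm_chain [] v = v"
  by (simp add: comm_chain_def)

lemma comm_chain_Cons [simp]: "comm_chain (p # ps) v = comm (repr1 p) (comm_chain ps v)"
  by (simp add: comm_chain_def)

lemma comm_chain_in_lcs:
  "set ps \<subseteq> LG_comp G 1 \<Longrightarrow> v \<in> lcs G k \<Longrightarrow> comm_chain ps v \<in> lcs G (k + length ps)"
  by (induction ps) (auto intro: commutator_in_lcs_Suc [OF repr1(1)])

lemma comm_chain_derived: "set ps \<subseteq> LG_comp G 1 \<Longrightarrow> v \<in> G' \<Longrightarrow> comm_chain ps v \<in> G'"
  using comm_chain_in_lcs [of ps v 1] lcs_subset_derived [of "1 + length ps"] by simp

lemma nest_homog:
  assumes ps: "set ps \<subseteq> LG_comp G 1" and a: "a \<in> LG_comp G 1" and b: "b \<in> LG_comp G 1"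
  shows "nest L (ps @ [a, b]) = homog (length ps + 2) (comm_chain ps (comm (repr1 a) (repr1 b)))"
  using ps
proof (induction ps)
  case Nil
  have "nest L [a, b] = homog 1 (repr1 a) \<otimes>\<^bsub>L\<^esub> homog 1 (repr1 b)" using repr1 a b by simp
  also have "\<dots> = homog 2 (comm (repr1 a) (repr1 b))"
    using LG_bracket_homog [of 1 1 "repr1 a" "repr1 b"] repr1 a b by (simp add: numeral_2_eq_2)
  finally show ?case by (simp add: numeral_2_eq_2)
next
  case (Cons p ps)
  let ?v = "comm_chain ps (comm (repr1 a) (repr1 b))"
  have v: "?v \<in> lcs G (length ps + 2 - 1)"
    using comm_chain_in_lcs [OF _ commutator_in_lcs_Suc [OF repr1(1) [OF a], of "repr1 b" 0]]
      Cons.prems repr1(1) [OF b] by simp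
  have "nest L ((p # ps) @ [a, b]) = p \<otimes>\<^bsub>L\<^esub> nest L (ps @ [a, b])" by (cases ps) auto
  also have "\<dots> = homog 1 (repr1 p) \<otimes>\<^bsub>L\<^esub> homog (length ps + 2) ?v"
    using Cons repr1 by simp
  also have "\<dots> = homog (length (p # ps) + 2) (comm (repr1 p) ?v)"
    using LG_bracket_homog [of 1 "length ps + 2" "repr1 p" ?v] repr1(1) [of p] Cons.prems v by simp
  finally show ?case by simp
qed

text \<open>The maps \<open>v \<mapsto> [x, v]\<close> commute on \<open>G'\<close>; outside \<open>G'\<close> they are replaced by the identity
  so that they commute everywhere.\<close>
lemma comm_chain_perm:
  assumes ps: "set ps \<subseteq> LG_comp G 1" and same_mset: "mset ps = mset qs" and v: "v \<in> G'"
  shows "comm_chain ps v = comm_chain qs v"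
proof -
  define F where "F p w = (if w \<in> G' then comm (repr1 p) w else w)" for p w
  have qs: "set qs \<subseteq> LG_comp G 1" using ps same_mset by (metis mset_eq_setD)
  have chain_F: "comm_chain xs v = foldr F xs v" if "set xs \<subseteq> LG_comp G 1" for xs
    using that
  proof (induction xs)
    case Nil
    then show ?case by simp
  next
    case (Cons p xs)
    then have IH: "comm_chain xs v = foldr F xs v" by simp
    have "comm_chain xs v \<in> G'" using comm_chain_derived [of xs v] Cons.prems v by simp
    then have "F p (foldr F xs v) = comm (repr1 p) (foldr F xs v)"
      using IH unfolding F_def [of p "foldr F xs v"] by simp
    then show ?case using IH by simp
  qed
  have F_commute: "F x \<circ> F y = F y \<circ> F x" if "x \<in> set (rev ps)" "y \<in> set (rev ps)" for x y
  proof
    fix w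
    have "repr1 x \<in> carrier G" "repr1 y \<in> carrier G" using that ps repr1 by auto
    then show "(F x \<circ> F y) w = (F y \<circ> F x) w"
      using commutator_left_commute by (auto simp: F_def)
  qed
  have "fold F (rev ps) = fold F (rev qs)"
    by (rule fold_multiset_equiv) (use F_commute same_mset in simp_all)
  then show ?thesis using chain_F ps qs by (simp add: foldr_conv_fold)
qed

lemma nest_perm:
  assumes "set ps \<subseteq> LG_comp G 1" "set qs \<subseteq> LG_comp G 1" "a \<in> LG_comp G 1" "b \<in> LG_comp G 1"
    and "mset ps = mset qs"
  shows "nest L (ps @ [a, b]) = nest L (qs @ [a, b])"
proof -
  have "length ps = length qs" using assms(5) mset_eq_length by blast
  moreover have "comm (repr1 a) (repr1 b) \<in> G'" using repr1 assms by simp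
  ultimately show ?thesis using nest_homog assms comm_chain_perm [OF assms(1,5)] by simp
qed

lemma nest_not_distinct:
  assumes ps: "set ps \<subseteq> LG_comp G 1" and a: "a \<in> LG_comp G 1" and b: "b \<in> LG_comp G 1"
    and "\<not> distinct ps"
  shows "nest L (ps @ [a, b]) = \<zero>\<^bsub>L\<^esub>"
proof -
  obtain xs ys zs y where ps_eq: "ps = xs @ [y] @ ys @ [y] @ zs"
    using not_distinct_decomp [OF \<open>\<not> distinct ps\<close>] by blast
  define qs where "qs = y # y # (xs @ ys @ zs)"
  have qs: "set qs \<subseteq> LG_comp G 1" and y: "y \<in> LG_comp G 1" using ps by (auto simp: ps_eq qs_def)
  have "comm_chain (xs @ ys @ zs) (comm (repr1 a) (repr1 b)) \<in> G'"
    using comm_chain_derived qs repr1 a b by (simp add: qs_def)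
  then have "comm_chain qs (comm (repr1 a) (repr1 b)) = \<one>"
    using commutator_commutator_self [OF repr1(1) [OF y]] by (simp add: qs_def)
  moreover have "nest L (ps @ [a, b]) = nest L (qs @ [a, b])"
    using nest_perm [OF ps qs a b] by (simp add: ps_eq qs_def)
  ultimately show ?thesis using nest_homog [OF qs a b] by simp
qed

end

section \<open>Expansion groups\<close>

locale expansion_grp = group G for G (structure) +
  fixes n :: nat and \<phi> :: "'a \<Rightarrow> nat set" and g :: "nat \<Rightarrow> 'a"
  assumes expansion: "expansion_group n G \<phi> g"
begin

lemma phi_hom: "\<phi> \<in> hom G (add_monoid (Vlie n))"
  using expansion unfolding expansion_group_def by blast

lemma phi_mult: "x \<in> carrier G \<Longrightarrow> y \<in> carrier G \<Longrightarrow> \<phi> (x \<otimes> y) = (\<phi> x - \<phi> y) \<union> (\<phi> y - \<phi> x)"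
  using hom_mult [OF phi_hom] by (simp add: Vlie_def)

lemma phi_closed: "x \<in> carrier G \<Longrightarrow> \<phi> x \<subseteq> {1..n}"
  using hom_in_carrier [OF phi_hom] by (force simp add: Vlie_def)

lemma g_basis: "i \<in> {1..n} \<Longrightarrow> g i \<in> carrier G \<and> \<phi> (g i) = {i} \<and> g i \<otimes> g i = \<one>"
  using expansion unfolding expansion_group_def basis_vec_def by blast

lemma kernel_commute: "x \<in> kernel G (add_monoid (Vlie n)) \<phi> \<Longrightarrow> y \<in> kernel G (add_monoid (Vlie n)) \<phi> \<Longrightarrow>
  x \<otimes> y = y \<otimes> x"
  using expansion unfolding expansion_group_def by blast

lemma kernel_square: "x \<in> kernel G (add_monoid (Vlie n)) \<phi> \<Longrightarrow> x \<otimes> x = \<one>"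
  using expansion unfolding expansion_group_def by blast

lemma derived_eq_kernel: "derived G (carrier G) = kernel G (add_monoid (Vlie n)) \<phi>"
proof -
  have "Gamma G 2 = derived G (carrier G)" by (simp add: Gamma_def numeral_2_eq_2)
  moreover have "Gamma G 2 = kernel G (add_monoid (Vlie n)) \<phi>"
    using expansion unfolding expansion_group_def by blast
  ultimately show ?thesis by simp
qed

lemma derived_iff_phi: "x \<in> derived G (carrier G) \<longleftrightarrow> x \<in> carrier G \<and> \<phi> x = {}"
  unfolding derived_eq_kernel by (simp add: kernel_def Vlie_def)

lemma phi_one [simp]: "\<phi> \<one> = {}"
  using derived_iff_phi [of \<one>] by simp

end

sublocale expansion_grp \<subseteq> exp2_metabelian_group
proof
  fix x y assume "x \<in> derived G (carrier G)" "y \<in> derived G (carrier G)"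
  then show "x \<otimes> y = y \<otimes> x" using kernel_commute unfolding derived_eq_kernel by blast
next
  fix x assume "x \<in> derived G (carrier G)"
  then show "x \<otimes> x = \<one>" using kernel_square unfolding derived_eq_kernel by blast
next
  fix x assume "x \<in> carrier G"
  then show "x \<otimes> x \<in> derived G (carrier G)" using derived_iff_phi [of "x \<otimes> x"] by (simp add: phi_mult)
qed

context expansion_grp
begin

abbreviation \<psi> :: "(nat \<Rightarrow> 'a set) \<Rightarrow> nat set" where
  "\<psi> \<equiv> Lphi G \<phi>"

lemma Lphi_LG_of: assumes r: "repr_seq r" shows "\<psi> (LG_of r) = \<phi> (r 1)"
proof -
  have r1: "r 1 \<in> carrier G" using r by simp
  have "\<exists>x. x \<in> LG_of r 1" using rcos_self [OF r1 subgroup_lcs [of 1]] by (auto simp: LG_of_def)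
  then obtain t where t: "t \<in> lcs G 1" "(SOME x. x \<in> LG_of r 1) = t \<otimes> r 1"
    using someI_ex [of "\<lambda>x. x \<in> LG_of r 1"] unfolding LG_of_def r_coset_def by blast
  then have "t \<in> carrier G" "\<phi> t = {}" using derived_iff_phi [of t] by auto
  then show ?thesis using t r1 by (simp add: Lphi_def phi_mult)
qed

lemma Lphi_closed: assumes "x \<in> carrier L" shows "\<psi> x \<in> Pow {1..n}"
proof (rule LG_carrierE [OF assms])
  fix r assume "repr_seq r" "x = LG_of r"
  then show ?thesis using phi_closed [of "r 1"] by (simp add: Lphi_LG_of)
qed

lemma Lphi_add: "x \<in> carrier L \<Longrightarrow> y \<in> carrier L \<Longrightarrow> \<psi> (x \<oplus>\<^bsub>L\<^esub> y) = (\<psi> x - \<psi> y) \<union> (\<psi> y - \<psi> x)"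
  by (elim LG_carrierE) (simp add: LG_add_LG_of Lphi_LG_of repr_seq_mult phi_mult)

lemma Lphi_bracket: "x \<in> carrier L \<Longrightarrow> y \<in> carrier L \<Longrightarrow> \<psi> (x \<otimes>\<^bsub>L\<^esub> y) = {}"
  by (elim LG_carrierE) (simp add: LG_bracket_LG_of Lphi_LG_of repr_seq_bracket bracket_seq_def)

lemma Lphi_homog: "a \<in> lcs G (m - 1) \<Longrightarrow> \<psi> (homog m a) = (if m = 1 then \<phi> a else {})"
  by (simp add: homog_def Lphi_LG_of repr_seq_single)

lemma Lphi_LG_comp: assumes x: "x \<in> LG_comp G m" shows "\<psi> x \<in> Vcomp n m"
proof (rule LG_compE [OF x])
  fix a assume a: "a \<in> lcs G (m - 1)" "x = homog m a"
  show ?thesis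
  proof (cases "m = 1")
    case True
    then show ?thesis using Lphi_closed [OF LG_comp_closed [OF x]] by (simp add: Vcomp_def)
  next
    case False
    then show ?thesis using a by (simp add: Vcomp_def Lphi_homog)
  qed
qed

lemma Lphi_graded_lie_hom: "graded_lie_hom L (LG_comp G) (Vlie n) (Vcomp n) \<psi>"
  unfolding graded_lie_hom_def
proof (intro conjI ballI allI)
  show "\<psi> \<in> carrier L \<rightarrow> carrier (Vlie n)" using Lphi_closed by (simp add: Vlie_def Pi_def)
  show "\<psi> (x \<oplus>\<^bsub>L\<^esub> y) = \<psi> x \<oplus>\<^bsub>Vlie n\<^esub> \<psi> y" if "x \<in> carrier L" "y \<in> carrier L" for x y
    using Lphi_add [OF that] by (simp add: Vlie_def)
  show "\<psi> (x \<otimes>\<^bsub>L\<^esub> y) = \<psi> x \<otimes>\<^bsub>Vlie n\<^esub> \<psi> y" if "x \<in> carrier L" "y \<in> carrier L" for x y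
    using Lphi_bracket [OF that] by (simp add: Vlie_def)
  show "\<psi> ` LG_comp G m \<subseteq> Vcomp n m" for m using Lphi_LG_comp by blast
qed

lemma phi_surj: "finite S \<Longrightarrow> S \<subseteq> {1..n} \<Longrightarrow> \<exists>x\<in>carrier G. \<phi> x = S"
proof (induction S rule: finite_induct)
  case empty
  then show ?case by (intro bexI [of _ \<one>]) simp_all
next
  case (insert i S)
  then obtain x where x: "x \<in> carrier G" "\<phi> x = S" by auto
  have "g i \<in> carrier G" "\<phi> (g i) = {i}" using g_basis insert.prems by auto
  moreover have "\<phi> (g i \<otimes> x) = insert i S" using calculation x insert.hyps by (auto simp: phi_mult)
  ultimately show ?case using x by (intro bexI [of _ "g i \<otimes> x"]) auto
qed

lemma Lphi_surj: "\<psi> ` carrier L = carrier (Vlie n)"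
proof
  show "\<psi> ` carrier L \<subseteq> carrier (Vlie n)" using Lphi_closed by (auto simp: Vlie_def)
  show "carrier (Vlie n) \<subseteq> \<psi> ` carrier L"
  proof
    fix S assume "S \<in> carrier (Vlie n)"
    then have "finite S" "S \<subseteq> {1..n}" using finite_subset by (auto simp: Vlie_def)
    then obtain x where "x \<in> carrier G" "\<phi> x = S" using phi_surj by blast
    then have "homog 1 x \<in> carrier L" "\<psi> (homog 1 x) = S"
      using Lphi_homog [of x 1] homog_closed [of x 1] by simp_all
    then show "S \<in> \<psi> ` carrier L" by (metis image_eqI)
  qed
qed

lemma lie_kernelE:
  assumes "x \<in> lie_kernel L \<psi>" obtains r where "repr_seq r" "r 1 \<in> G'" "x = LG_of r"
proof -
  obtain r where r: "repr_seq r" "x = LG_of r"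
    using assms LG_carrierE by (auto simp: lie_kernel_def)
  then have "r 1 \<in> G'" using assms derived_iff_phi [of "r 1"] by (simp add: lie_kernel_def Lphi_LG_of)
  then show ?thesis using that r by blast
qed

lemma subgroup_lie_kernel: "subgroup (lie_kernel L \<psi>) (add_monoid L)"
proof (rule L.add_subgroupI_char2)
  show "lie_kernel L \<psi> \<subseteq> carrier L" by (auto simp: lie_kernel_def)
  show "lie_kernel L \<psi> \<noteq> {}" by (auto simp: lie_kernel_def LG_zero_eq Lphi_LG_of LG_of_closed)
  fix a b assume "a \<in> lie_kernel L \<psi>" "b \<in> lie_kernel L \<psi>"
  then show "a \<oplus>\<^bsub>L\<^esub> b \<in> lie_kernel L \<psi>" by (auto simp: lie_kernel_def Lphi_add)
qed (rule LG_add_self)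

lemma lie_kernel_bracket: "x \<in> lie_kernel L \<psi> \<Longrightarrow> y \<in> lie_kernel L \<psi> \<Longrightarrow> x \<otimes>\<^bsub>L\<^esub> y = \<zero>\<^bsub>L\<^esub>"
  by (elim lie_kernelE) (simp add: LG_bracket_eq_zero_of_derived)

lemma bracket_span_eq_lie_kernel: "bracket_span = lie_kernel L \<psi>"
proof
  have "{x \<otimes>\<^bsub>L\<^esub> y | x y. x \<in> carrier L \<and> y \<in> carrier L} \<subseteq> lie_kernel L \<psi>"
    using LG_bracket_closed Lphi_bracket by (auto simp: lie_kernel_def)
  then show "bracket_span \<subseteq> lie_kernel L \<psi>"
    using L.add.generate_subgroup_incl [OF _ subgroup_lie_kernel] by simp
next
  show "lie_kernel L \<psi> \<subseteq> bracket_span"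
  proof
    fix x assume "x \<in> lie_kernel L \<psi>"
    then obtain r where r: "repr_seq r" "r 1 \<in> G'" "x = LG_of r" by (elim lie_kernelE)
    have "LG_of r \<in> bracket_span"
    proof (induction rule: LG_of_induct [OF r(1)])
      case 1
      then show ?case using generate.one [of "add_monoid L"] by simp
    next
      case (2 y m)
      have y: "y \<in> bracket_span" using 2 by blast
      have "homog m (r m) \<in> bracket_span"
      proof (cases "m = 1")
        case True
        then show ?thesis using r(2) homog_eq_zero [of "r 1" 1] generate.one [of "add_monoid L"] by simp
      next
        case False
        then show ?thesis using 2 homog_in_bracket_span repr_seq_in_lcs [OF r(1)] by simp
      qed
      then show ?case using generate.eng [OF y] by simp
    qed
    then show "x \<in> bracket_span" using r by simp
  qed
qed

text \<open>If \<open>\<phi> x = e\<^sub>i\<close> then \<open>x = g\<^sub>i a\<close> with \<open>a \<in> G'\<close>, so \<open>x\<^sup>2 = [g\<^sub>i, a]\<close> because \<open>g\<^sub>i\<^sup>2 = 1\<close>.\<close>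
lemma square_in_lcs_2: assumes i: "i \<in> {1..n}" and x: "x \<in> carrier G" "\<phi> x = {i}"
  shows "x \<otimes> x \<in> lcs G 2"
proof -
  have gi: "g i \<in> carrier G" "\<phi> (g i) = {i}" "g i \<otimes> g i = \<one>" using g_basis [OF i] by auto
  then have inv_gi: "inv (g i) = g i" using inv_equality by blast
  define a where "a = g i \<otimes> x"
  have a: "a \<in> G'" using gi x derived_iff_phi [of a] by (simp add: a_def phi_mult)
  have "x = g i \<otimes> a" using gi x by (simp add: a_def m_assoc [symmetric])
  then have "x \<otimes> x = comm (g i) a" using gi a inv_gi by (simp add: commutator_def m_assoc)
  moreover have "comm (g i) a \<in> lcs G (Suc 1)" using commutator_in_lcs_Suc [OF gi(1), of a 1] a by simp
  ultimately show ?thesis by (simp add: numeral_2_eq_2)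
qed

lemma bracket_basis_twice:
  assumes t1: "t1 \<in> LG_comp G 1" and t2: "t2 \<in> LG_comp G 1" and basis: "\<psi> t1 \<in> basis_vec ` {1..n}"
  shows "t1 \<otimes>\<^bsub>L\<^esub> (t1 \<otimes>\<^bsub>L\<^esub> t2) = \<zero>\<^bsub>L\<^esub>"
proof -
  let ?x = "repr1 t1" and ?y = "repr1 t2"
  obtain i where i: "i \<in> {1..n}" "\<psi> t1 = {i}" using basis by (auto simp: basis_vec_def)
  have xy: "?x \<in> carrier G" "?y \<in> carrier G" using repr1 t1 t2 by auto
  have "\<phi> ?x = {i}" using i Lphi_homog [of ?x 1] repr1(2) [OF t1] xy by simp
  then have "comm (?x \<otimes> ?x) ?y \<in> lcs G (Suc 2)"
    using commutator_in_lcs_Suc' [OF xy(2) square_in_lcs_2 [OF i(1) xy(1)]] by simp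
  then have "comm_chain [t1] (comm ?x ?y) \<in> lcs G 3"
    using commutator_square_left [OF xy] by simp
  moreover have "t1 \<otimes>\<^bsub>L\<^esub> (t1 \<otimes>\<^bsub>L\<^esub> t2) = homog 3 (comm_chain [t1] (comm ?x ?y))"
    using nest_homog [of "[t1]" t1 t2] t1 t2 by (simp add: numeral_3_eq_3)
  ultimately show ?thesis using homog_eq_zero by simp
qed

end

theorem proposition3p3:
  fixes n :: nat and G :: "('g, 'b) monoid_scheme" and \<phi> :: "'g \<Rightarrow> nat set"
    and g :: "nat \<Rightarrow> 'g"
  assumes "expansion_group n G \<phi> g"
  shows "expansion_lie n (LG G) (LG_comp G) (Lphi G \<phi>)"
proof -
  interpret expansion_grp G n \<phi> g
    using assms by (simp add: expansion_grp_def expansion_grp_axioms_def expansion_group_def)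
  show ?thesis
    unfolding expansion_lie_def
  proof (intro conjI allI ballI impI)
    show "graded_lie_F2 L (LG_comp G)" by (rule LG_graded_lie_F2)
    show "graded_lie_hom L (LG_comp G) (Vlie n) (Vcomp n) \<psi>" by (rule Lphi_graded_lie_hom)
    show "\<psi> ` carrier L = carrier (Vlie n)" by (rule Lphi_surj)
    show "subgroup (lie_kernel L \<psi>) (add_monoid L)" by (rule subgroup_lie_kernel)
    show "x \<otimes>\<^bsub>L\<^esub> y = \<zero>\<^bsub>L\<^esub>" if "x \<in> lie_kernel L \<psi>" "y \<in> lie_kernel L \<psi>" for x y
      using lie_kernel_bracket that .
    show "bracket_span = lie_kernel L \<psi>" by (rule bracket_span_eq_lie_kernel)
    show "nest L (ps @ [a, b]) = nest L (qs @ [a, b])"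
      if "set ps \<subseteq> LG_comp G 1" "set qs \<subseteq> LG_comp G 1" "a \<in> LG_comp G 1" "b \<in> LG_comp G 1"
        and "mset ps = mset qs" for ps qs a b
      using nest_perm that .
    show "nest L (ps @ [a, b]) = \<zero>\<^bsub>L\<^esub>"
      if "set ps \<subseteq> LG_comp G 1" "a \<in> LG_comp G 1" "b \<in> LG_comp G 1" "\<not> distinct ps" for ps a b
      using nest_not_distinct that .
    show "t1 \<otimes>\<^bsub>L\<^esub> (t1 \<otimes>\<^bsub>L\<^esub> t2) = \<zero>\<^bsub>L\<^esub>"
      if "t1 \<in> LG_comp G 1" "t2 \<in> LG_comp G 1" "\<psi> t1 \<in> basis_vec ` {1..n}" for t1 t2
      using bracket_basis_twice that .
  qed
qed

end
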